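(* Let $G$ be a finitely generated residually finite group with CFQ. (1) If there exist a finite generating set $S$ of $G$ and a recursive function $h:\mathbb{N}\to\mathbb{N}$ with $\rho_S(n)\leq h(n)$ for all $n$, then $G$ has solvable word problem. (2) If $G$ has solvable word problem, then for every finite generating set $S$ of $G$ the function $\rho_S$ is recursive. Consequently, a finitely generated residually finite group with CFQ has solvable word problem if and only if $\rho_S$ is recursive for every finite generating set $S$.
   Context: For a residually finite group $G$ with finite generating set $S$, the depth function $\rho_S:\mathbb{N}\to\mathbb{N}$ assigns to $n$ the smallest $k$ such that for every non-trivial element $g$ of $G$ of word length at most $n$ with respect to $S$, there is a finite quotient of $G$ of order at most $k$ in which the image of $g$ is non-trivial. A marked finite group is a pair $(F,f)$ with $F$ a finite group (given by its multiplication table) and $f:S\to F$ a function; $G$ has CFQ if there is an algorithm which, given $(F,f)$, decides whether $f$ extends to a group homomorphism $G\to F$. *)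

theory Defs
  imports "HOL-Algebra.Algebra" "HOL-Library.Nat_Bijection"
begin

fun prec :: "(nat list \<Rightarrow> nat) \<Rightarrow> (nat list \<Rightarrow> nat) \<Rightarrow> nat \<Rightarrow> nat list \<Rightarrow> nat" where
  "prec f g 0 xs = f xs"
| "prec f g (Suc y) xs = g (y # prec f g y xs # xs)"

text \<open>total_rec n f: f (restricted to argument lists of length n) is a total
  (mu-)recursive function of arity n (Kleene: closure of the basic functions under
  composition, primitive recursion and regular minimisation).\<close>
inductive total_rec :: "nat \<Rightarrow> (nat list \<Rightarrow> nat) \<Rightarrow> bool" where
  zero: "total_rec n (\<lambda>xs. 0)"
| succ: "total_rec 1 (\<lambda>xs. Suc (hd xs))"
| proj: "i < n \<Longrightarrow> total_rec n (\<lambda>xs. xs ! i)"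
| comp: "total_rec m f \<Longrightarrow> length gs = m \<Longrightarrow> list_all (total_rec n) gs
          \<Longrightarrow> total_rec n (\<lambda>xs. f (map (\<lambda>g. g xs) gs))"
| prim_rec: "total_rec n f \<Longrightarrow> total_rec (Suc (Suc n)) g
          \<Longrightarrow> total_rec (Suc n) (\<lambda>xs. prec f g (hd xs) (tl xs))"
| mu: "total_rec (Suc n) f \<Longrightarrow> (\<forall>xs. length xs = n \<longrightarrow> (\<exists>y. f (y # xs) = 0))
          \<Longrightarrow> total_rec n (\<lambda>xs. LEAST y. f (y # xs) = 0)"
| ext: "total_rec n f \<Longrightarrow> (\<forall>xs. length xs = n \<longrightarrow> g xs = f xs) \<Longrightarrow> total_rec n g"

definition recursive_fun :: "(nat \<Rightarrow> nat) \<Rightarrow> bool" where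
  "recursive_fun h \<longleftrightarrow> total_rec 1 (\<lambda>xs. h (hd xs))"

definition decidable_set :: "nat set \<Rightarrow> bool" where
  "decidable_set A \<longleftrightarrow> (\<exists>c. recursive_fun c \<and> (\<forall>n. c n = (if n \<in> A then 1 else 0)))"

text \<open>A finite generating set S is given as a list ss with set ss = S.
  Letters are natural numbers: 2*i stands for ss!i, 2*i+1 for its inverse.\<close>

definition gen_list :: "('a, 'b) monoid_scheme \<Rightarrow> 'a list \<Rightarrow> bool" where
  "gen_list G ss \<longleftrightarrow> set ss \<subseteq> carrier G \<and> generate G (set ss) = carrier G"

definition fin_gen :: "('a, 'b) monoid_scheme \<Rightarrow> bool" where
  "fin_gen G \<longleftrightarrow> (\<exists>ss. gen_list G ss)"

definition valid_word :: "'a list \<Rightarrow> nat list \<Rightarrow> bool" where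
  "valid_word ss w \<longleftrightarrow> (\<forall>a\<in>set w. a < 2 * length ss)"

definition letter_val :: "('a, 'b) monoid_scheme \<Rightarrow> 'a list \<Rightarrow> nat \<Rightarrow> 'a" where
  "letter_val G ss a = (if even a then ss ! (a div 2) else inv\<^bsub>G\<^esub> (ss ! (a div 2)))"

definition word_eval :: "('a, 'b) monoid_scheme \<Rightarrow> 'a list \<Rightarrow> nat list \<Rightarrow> 'a" where
  "word_eval G ss w = foldr (\<lambda>a acc. letter_val G ss a \<otimes>\<^bsub>G\<^esub> acc) w \<one>\<^bsub>G\<^esub>"

definition word_problem_set :: "('a, 'b) monoid_scheme \<Rightarrow> 'a list \<Rightarrow> nat set" where
  "word_problem_set G ss =
     {list_encode w | w. valid_word ss w \<and> word_eval G ss w = \<one>\<^bsub>G\<^esub>}"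

definition solvable_WP :: "('a, 'b) monoid_scheme \<Rightarrow> bool" where
  "solvable_WP G \<longleftrightarrow> (\<exists>ss. gen_list G ss \<and> decidable_set (word_problem_set G ss))"

text \<open>Finite quotients of G correspond to normal subgroups of finite index; the
  order of the quotient G/N is the number of cosets.\<close>
definition finite_quot_detects :: "('a, 'b) monoid_scheme \<Rightarrow> 'a set \<Rightarrow> 'a \<Rightarrow> bool" where
  "finite_quot_detects G N g \<longleftrightarrow> N \<lhd> G \<and> finite (rcosets\<^bsub>G\<^esub> N) \<and> g \<notin> N"

definition residually_finite :: "('a, 'b) monoid_scheme \<Rightarrow> bool" where
  "residually_finite G \<longleftrightarrow>
     (\<forall>g\<in>carrier G. g \<noteq> \<one>\<^bsub>G\<^esub> \<longrightarrow> (\<exists>N. finite_quot_detects G N g))"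

definition depth :: "('a, 'b) monoid_scheme \<Rightarrow> 'a list \<Rightarrow> nat \<Rightarrow> nat" where
  "depth G ss n = (LEAST k. \<forall>w. valid_word ss w \<and> length w \<le> n \<and> word_eval G ss w \<noteq> \<one>\<^bsub>G\<^esub>
       \<longrightarrow> (\<exists>N. finite_quot_detects G N (word_eval G ss w) \<and> card (rcosets\<^bsub>G\<^esub> N) \<le> k))"

text \<open>A finite group is given by a multiplication table t on {0..<length t}.\<close>
definition table_group :: "nat list list \<Rightarrow> nat monoid" where
  "table_group t = \<lparr>carrier = {..<length t}, monoid.mult = (\<lambda>a b. t ! a ! b),
     one = (SOME e. e < length t \<and> (\<forall>a<length t. t ! e ! a = a \<and> t ! a ! e = a))\<rparr>"

definition valid_table :: "nat list list \<Rightarrow> bool" where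
  "valid_table t \<longleftrightarrow> (\<forall>r\<in>set t. length r = length t \<and> (\<forall>x\<in>set r. x < length t))
     \<and> group (table_group t)"

text \<open>A marking f : S \<rightarrow> F is given as a list fl with fl ! i = f (ss ! i).\<close>
definition marked_code :: "nat list list \<Rightarrow> nat list \<Rightarrow> nat" where
  "marked_code t fl = prod_encode (list_encode (map list_encode t), list_encode fl)"

definition extends_to_hom :: "('a, 'b) monoid_scheme \<Rightarrow> 'a list \<Rightarrow> nat list list \<Rightarrow> nat list \<Rightarrow> bool" where
  "extends_to_hom G ss t fl \<longleftrightarrow>
     (\<exists>\<phi>\<in>hom G (table_group t). \<forall>i<length ss. \<phi> (ss ! i) = fl ! i)"

definition CFQ_wrt :: "('a, 'b) monoid_scheme \<Rightarrow> 'a list \<Rightarrow> bool" where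
  "CFQ_wrt G ss \<longleftrightarrow> (\<exists>c. recursive_fun c \<and>
     (\<forall>t fl. valid_table t \<and> length fl = length ss \<and> (\<forall>x\<in>set fl. x < length t) \<longrightarrow>
        (c (marked_code t fl) = 1 \<longleftrightarrow> extends_to_hom G ss t fl)))"

definition CFQ :: "('a, 'b) monoid_scheme \<Rightarrow> bool" where
  "CFQ G \<longleftrightarrow> (\<exists>ss. gen_list G ss \<and> CFQ_wrt G ss)"

end

theory Submission
  imports Defs
begin

text \<open>
  Fix a generating list for which CFQ holds. Whether a word is nontrivial in some quotient of
  order at most \<open>k\<close> is decidable: such quotients are the images of homomorphisms into groups
  given by multiplication tables with at most \<open>k\<close> rows, the codes of these tables together with
  a marking of the generators are bounded by a computable function of \<open>k\<close>, the CFQ algorithm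
  tells which marked tables come from homomorphisms, and the image of the word can then be read
  off the table. Since translating words between generating lists is computable, the same holds
  over any generating list.

  (1) If \<open>\<rho>\<^sub>S \<le> h\<close> with \<open>h\<close> recursive, then by residual finiteness a word \<open>w\<close> is trivial iff it
  is not detected in a quotient of order at most \<open>h |w|\<close>, which is decidable.
  (2) If the word problem is solvable, then whether \<open>k\<close> bounds the depth at \<open>n\<close> is decidable,
  because the finitely many nontrivial words of length at most \<open>n\<close> can be listed; hence
  \<open>\<rho>\<^sub>S(n)\<close>, the least such \<open>k\<close>, is obtained by unbounded minimisation.
\<close>

section \<open>Total recursive functions of several arguments\<close>

lemma total_rec_comp1: "total_rec 1 F \<Longrightarrow> total_rec n A \<Longrightarrow> total_rec n (\<lambda>xs. F [A xs])"
  using total_rec.comp[of 1 F "[A]" n] by simp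

lemma total_rec_comp2:
  "total_rec 2 F \<Longrightarrow> total_rec n A \<Longrightarrow> total_rec n B \<Longrightarrow> total_rec n (\<lambda>xs. F [A xs, B xs])"
  using total_rec.comp[of 2 F "[A,B]" n] by simp

lemma total_rec_cong: "total_rec n f \<Longrightarrow> (\<And>xs. length xs = n \<Longrightarrow> g xs = f xs) \<Longrightarrow> total_rec n g"
  using total_rec.ext by blast

lemma length_Suc_0_conv_nth: "length xs = Suc 0 \<Longrightarrow> xs = [xs!0]"
  by (cases xs) auto

lemma length_2_conv_nth: "length xs = 2 \<Longrightarrow> xs = [xs!0, xs!1]"
  by (cases xs; cases "tl xs") auto

lemma total_rec_cong1: "total_rec 1 f \<Longrightarrow> (\<And>a. g [a] = f [a]) \<Longrightarrow> total_rec 1 g"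
  by (erule total_rec_cong) (metis length_Suc_0_conv_nth One_nat_def)

lemma total_rec_cong2: "total_rec 2 f \<Longrightarrow> (\<And>a b. g [a,b] = f [a,b]) \<Longrightarrow> total_rec 2 g"
  by (erule total_rec_cong) (metis length_2_conv_nth)

lemma total_rec_prim_rec2:
  assumes b: "total_rec 1 (\<lambda>xs. b (hd xs))"
    and s: "total_rec 3 (\<lambda>xs. s (xs!0) (xs!1) (xs!2))"
    and R0: "\<And>x. R 0 x = b x" and RS: "\<And>n x. R (Suc n) x = s n (R n x) x"
  shows "total_rec 2 (\<lambda>xs. R (xs!0) (xs!1))"
proof -
  let ?F = "\<lambda>xs. b (hd xs)" and ?S = "\<lambda>xs. s (xs!0) (xs!1) (xs!2)"
  have P: "total_rec 2 (\<lambda>xs. prec ?F ?S (hd xs) (tl xs))"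
    using total_rec.prim_rec[OF b, of ?S] s by (simp add: numeral_2_eq_2 numeral_3_eq_3)
  have prec_eq: "prec ?F ?S n [x] = R n x" for n x
    by (induction n) (auto simp: R0 RS)
  from P show ?thesis
    by (rule total_rec_cong2) (simp add: prec_eq[symmetric])
qed

lemma total_rec_Suc: "total_rec n A \<Longrightarrow> total_rec n (\<lambda>xs. Suc (A xs))"
  using total_rec_comp1[OF total_rec.succ] by simp

lemma total_rec_hd: "total_rec 1 (\<lambda>xs. hd xs)"
  by (rule total_rec_cong1[OF total_rec.proj[of 0 1]]) auto

lemma total_rec_plus: "total_rec 2 (\<lambda>xs. xs!0 + xs!1)"
  by (rule total_rec_prim_rec2[where b="\<lambda>x. x" and s="\<lambda>n r x. Suc r" and R="(+)"],
      rule total_rec_hd, rule total_rec_Suc, rule total_rec.proj) simp_all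

lemma total_rec_add: "total_rec n A \<Longrightarrow> total_rec n B \<Longrightarrow> total_rec n (\<lambda>xs. A xs + B xs)"
  using total_rec_comp2[OF total_rec_plus] by simp

lemma total_rec_pred: "total_rec 1 (\<lambda>xs. hd xs - 1)"
proof -
  have "total_rec 2 (\<lambda>xs. xs!0 - 1)"
    by (rule total_rec_prim_rec2[where b="\<lambda>x. 0" and s="\<lambda>n r x. n" and R="\<lambda>n x. n - 1"],
        rule total_rec.zero, rule total_rec.proj) simp_all
  from total_rec_comp2[OF this total_rec_hd total_rec.zero] show ?thesis
    by (rule total_rec_cong1) simp
qed

lemma total_rec_minus: "total_rec 2 (\<lambda>xs. xs!1 - xs!0)"
  by (rule total_rec_prim_rec2[where b="\<lambda>x. x" and s="\<lambda>n r x. r - 1" and R="\<lambda>n x. x - n"],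
      rule total_rec_hd) (use total_rec_comp1[OF total_rec_pred total_rec.proj[of 1 3]] in simp_all)

lemma total_rec_diff: "total_rec n A \<Longrightarrow> total_rec n B \<Longrightarrow> total_rec n (\<lambda>xs. A xs - B xs)"
  using total_rec_comp2[OF total_rec_minus, of n B A] by simp

lemma total_rec_times: "total_rec 2 (\<lambda>xs. xs!0 * xs!1)"
  by (rule total_rec_prim_rec2[where b="\<lambda>x. 0" and s="\<lambda>n r x. r + x" and R="\<lambda>n x. n * x"],
      rule total_rec.zero, (rule total_rec_add; rule total_rec.proj)) simp_all

lemma total_rec_mult: "total_rec n A \<Longrightarrow> total_rec n B \<Longrightarrow> total_rec n (\<lambda>xs. A xs * B xs)"
  using total_rec_comp2[OF total_rec_times] by simp

lemma total_rec_triangle1: "total_rec 1 (\<lambda>xs. triangle (hd xs))"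
proof -
  have "total_rec 2 (\<lambda>xs. triangle (xs!0))"
    by (rule total_rec_prim_rec2[where b="\<lambda>x. 0" and s="\<lambda>n r x. r + Suc n" and R="\<lambda>n x. triangle n"],
        rule total_rec.zero, rule total_rec_add, rule total_rec.proj, simp, rule total_rec_Suc,
        rule total_rec.proj) simp_all
  from total_rec_comp2[OF this total_rec_hd total_rec.zero] show ?thesis
    by (rule total_rec_cong1) simp
qed

lemma total_rec_triangle: "total_rec n A \<Longrightarrow> total_rec n (\<lambda>xs. triangle (A xs))"
  using total_rec_comp1[OF total_rec_triangle1] by simp

lemma total_rec_prod_encode:
  "total_rec n A \<Longrightarrow> total_rec n B \<Longrightarrow> total_rec n (\<lambda>xs. prod_encode (A xs, B xs))"
  unfolding prod_encode_def prod.case by (intro total_rec_add total_rec_triangle)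

definition unpair_fst :: "nat \<Rightarrow> nat" where "unpair_fst n = fst (prod_decode n)"

definition unpair_snd :: "nat \<Rightarrow> nat" where "unpair_snd n = snd (prod_decode n)"

lemma unpair_fst_prod_encode [simp]: "unpair_fst (prod_encode (a,b)) = a"
  by (simp add: unpair_fst_def)

lemma unpair_snd_prod_encode [simp]: "unpair_snd (prod_encode (a,b)) = b"
  by (simp add: unpair_snd_def)

lemma prod_encode_unpair [simp]: "prod_encode (unpair_fst n, unpair_snd n) = n"
  by (simp add: unpair_fst_def unpair_snd_def)

lemma triangle_mono: "y \<le> z \<Longrightarrow> triangle y \<le> triangle z"
  by (induction z) (auto simp: le_Suc_eq)

lemma prod_encode_mono: "a \<le> a' \<Longrightarrow> b \<le> b' \<Longrightarrow> prod_encode (a,b) \<le> prod_encode (a',b')"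
  unfolding prod_encode_def using triangle_mono[of "a+b" "a'+b'"] by simp

text \<open>The diagonal on which \<open>n\<close> lies; inverting the pairing reduces to finding it by minimisation.\<close>
definition unpair_sum :: "nat \<Rightarrow> nat" where "unpair_sum n = (LEAST y. n < triangle (Suc y))"

lemma unpair_sum_eq: "unpair_sum n = unpair_fst n + unpair_snd n"
proof -
  obtain a b where ab: "prod_decode n = (a,b)" by fastforce
  have n: "n = triangle (a+b) + a"
    using prod_decode_inverse[of n] ab by (simp add: prod_encode_def)
  have "(LEAST y. n < triangle (Suc y)) = a + b"
  proof (rule Least_equality)
    show "n < triangle (Suc (a + b))" using n by simp
    fix y assume "n < triangle (Suc y)"
    then show "a + b \<le> y"
      using n triangle_mono[of "Suc y" "a + b"] by (cases "a + b \<le> y") auto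
  qed
  then show ?thesis by (simp add: unpair_sum_def unpair_fst_def unpair_snd_def ab)
qed

lemma unpair_fst_eq: "unpair_fst n = n - triangle (unpair_sum n)"
proof -
  have "n = triangle (unpair_fst n + unpair_snd n) + unpair_fst n"
    using prod_encode_unpair[of n] unfolding prod_encode_def by simp
  then show ?thesis by (simp add: unpair_sum_eq)
qed

lemma total_rec_unpair_sum1: "total_rec 1 (\<lambda>xs. unpair_sum (hd xs))"
proof -
  let ?f = "\<lambda>xs. Suc (xs!1) - triangle (Suc (xs!0))"
  have f: "total_rec (Suc 1) ?f"
    using total_rec_diff[OF total_rec_Suc[OF total_rec.proj[of 1 2]]
        total_rec_triangle[OF total_rec_Suc[OF total_rec.proj[of 0 2]]]]
    by (simp add: numeral_2_eq_2)
  have "Suc x \<le> triangle (Suc x)" for x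
    by (induction x) auto
  then have "\<forall>xs. length xs = 1 \<longrightarrow> (\<exists>y. ?f (y # xs) = 0)"
    by (metis diff_is_0_eq nth_Cons_0 nth_Cons_Suc One_nat_def)
  from total_rec.mu[OF f this] show ?thesis
    by (rule total_rec_cong1) (simp add: unpair_sum_def less_Suc_eq_le)
qed

lemma total_rec_unpair_sum: "total_rec n A \<Longrightarrow> total_rec n (\<lambda>xs. unpair_sum (A xs))"
  using total_rec_comp1[OF total_rec_unpair_sum1] by simp

lemma total_rec_unpair_fst: "total_rec n A \<Longrightarrow> total_rec n (\<lambda>xs. unpair_fst (A xs))"
  unfolding unpair_fst_eq by (intro total_rec_diff total_rec_triangle total_rec_unpair_sum)

lemma total_rec_unpair_snd: "total_rec n A \<Longrightarrow> total_rec n (\<lambda>xs. unpair_snd (A xs))"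
proof -
  have "unpair_snd m = unpair_sum m - unpair_fst m" for m
    by (simp add: unpair_sum_eq)
  then show "total_rec n A \<Longrightarrow> ?thesis"
    by (simp add: total_rec_diff total_rec_unpair_fst total_rec_unpair_sum)
qed

lemma total_rec_recursive_fun: "recursive_fun f \<Longrightarrow> total_rec n A \<Longrightarrow> total_rec n (\<lambda>xs. f (A xs))"
  unfolding recursive_fun_def using total_rec_comp1 by fastforce

lemma recursive_fun_id: "recursive_fun (\<lambda>x. x)"
  unfolding recursive_fun_def by (rule total_rec_hd)

lemma recursive_fun_const: "recursive_fun (\<lambda>x. k)"
  unfolding recursive_fun_def
proof (induction k)
  case 0 show ?case by (rule total_rec.zero)
next
  case (Suc k) show ?case using total_rec_Suc[OF Suc] .
qed

lemma recursive_fun_Suc: "recursive_fun f \<Longrightarrow> recursive_fun (\<lambda>x. Suc (f x))"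
  unfolding recursive_fun_def by (rule total_rec_Suc)

lemma recursive_fun_add: "recursive_fun f \<Longrightarrow> recursive_fun g \<Longrightarrow> recursive_fun (\<lambda>x. f x + g x)"
  unfolding recursive_fun_def by (rule total_rec_add)

lemma recursive_fun_sub: "recursive_fun f \<Longrightarrow> recursive_fun g \<Longrightarrow> recursive_fun (\<lambda>x. f x - g x)"
  unfolding recursive_fun_def by (rule total_rec_diff)

lemma recursive_fun_mult: "recursive_fun f \<Longrightarrow> recursive_fun g \<Longrightarrow> recursive_fun (\<lambda>x. f x * g x)"
  unfolding recursive_fun_def by (rule total_rec_mult)

lemma recursive_fun_prod_encode: "recursive_fun f \<Longrightarrow> recursive_fun g
    \<Longrightarrow> recursive_fun (\<lambda>x. prod_encode (f x, g x))"
  unfolding recursive_fun_def by (rule total_rec_prod_encode)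

lemma recursive_fun_unpair_fst: "recursive_fun f \<Longrightarrow> recursive_fun (\<lambda>x. unpair_fst (f x))"
  unfolding recursive_fun_def by (rule total_rec_unpair_fst)

lemma recursive_fun_unpair_snd: "recursive_fun f \<Longrightarrow> recursive_fun (\<lambda>x. unpair_snd (f x))"
  unfolding recursive_fun_def by (rule total_rec_unpair_snd)

lemma recursive_fun_comp: "recursive_fun f \<Longrightarrow> recursive_fun g \<Longrightarrow> recursive_fun (\<lambda>x. f (g x))"
  unfolding recursive_fun_def using total_rec_recursive_fun[of f 1 "\<lambda>xs. g (hd xs)"]
  by (simp add: recursive_fun_def)

definition recursive_fun2 :: "(nat \<Rightarrow> nat \<Rightarrow> nat) \<Rightarrow> bool" where
  "recursive_fun2 F \<longleftrightarrow> recursive_fun (\<lambda>p. F (unpair_fst p) (unpair_snd p))"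

definition recursive_fun3 :: "(nat \<Rightarrow> nat \<Rightarrow> nat \<Rightarrow> nat) \<Rightarrow> bool" where
  "recursive_fun3 F \<longleftrightarrow>
     recursive_fun (\<lambda>q. F (unpair_fst q) (unpair_fst (unpair_snd q)) (unpair_snd (unpair_snd q)))"

lemma recursive_fun_app2: "recursive_fun2 F \<Longrightarrow> recursive_fun f \<Longrightarrow> recursive_fun g
    \<Longrightarrow> recursive_fun (\<lambda>x. F (f x) (g x))"
  unfolding recursive_fun2_def using recursive_fun_comp[of "\<lambda>p. F (unpair_fst p) (unpair_snd p)"
      "\<lambda>x. prod_encode (f x, g x)"] recursive_fun_prod_encode
  by simp

lemma recursive_fun_app3: "recursive_fun3 F \<Longrightarrow> recursive_fun f \<Longrightarrow> recursive_fun g \<Longrightarrow> recursive_fun h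
    \<Longrightarrow> recursive_fun (\<lambda>x. F (f x) (g x) (h x))"
  unfolding recursive_fun3_def
  using recursive_fun_comp[of "\<lambda>q. F (unpair_fst q) (unpair_fst (unpair_snd q)) (unpair_snd (unpair_snd q))"
      "\<lambda>x. prod_encode (f x, prod_encode (g x, h x))"] recursive_fun_prod_encode
  by simp

lemma recursive_fun2_prim_rec:
  assumes b: "recursive_fun b" and s: "recursive_fun3 s"
    and R0: "\<And>x. R 0 x = b x" and RS: "\<And>n x. R (Suc n) x = s n (R n x) x"
  shows "recursive_fun2 R"
proof -
  have s3: "total_rec 3 (\<lambda>xs. s (xs!0) (xs!1) (xs!2))"
  proof -
    have A: "total_rec 3 (\<lambda>xs. prod_encode (xs!0, prod_encode (xs!1, xs!2)))"
      by (intro total_rec_prod_encode total_rec.proj) simp_all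
    show ?thesis using total_rec_recursive_fun[OF s[unfolded recursive_fun3_def] A] by simp
  qed
  have "total_rec 2 (\<lambda>xs. R (xs!0) (xs!1))"
    by (rule total_rec_prim_rec2[OF b[unfolded recursive_fun_def] s3 R0 RS])
  from total_rec_comp2[OF this total_rec_unpair_fst[OF total_rec_hd]
      total_rec_unpair_snd[OF total_rec_hd]]
  show ?thesis unfolding recursive_fun2_def recursive_fun_def by simp
qed

lemma recursive_fun_Least:
  assumes F: "recursive_fun2 F" and ex: "\<And>x. \<exists>y. F y x = 0"
  shows "recursive_fun (\<lambda>x. LEAST y. F y x = 0)"
proof -
  have A: "total_rec 2 (\<lambda>xs. prod_encode (xs!0, xs!1))"
    by (intro total_rec_prod_encode total_rec.proj) auto
  have "total_rec 2 (\<lambda>xs. F (xs!0) (xs!1))"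
    using total_rec_recursive_fun[OF F[unfolded recursive_fun2_def] A] by simp
  then have F2: "total_rec (Suc 1) (\<lambda>xs. F (xs!0) (xs!1))" by (simp add: numeral_2_eq_2)
  have ex2: "\<forall>xs. length xs = 1 \<longrightarrow> (\<exists>y. (\<lambda>xs. F (xs!0) (xs!1)) (y # xs) = 0)"
    using ex by simp
  have "total_rec 1 (\<lambda>xs. LEAST y. (\<lambda>xs. F (xs!0) (xs!1)) (y # xs) = 0)"
    by (rule total_rec.mu[OF F2 ex2])
  then show ?thesis unfolding recursive_fun_def
    by (rule total_rec_cong1) simp
qed

definition decidable_pred :: "(nat \<Rightarrow> bool) \<Rightarrow> bool" where
  "decidable_pred P \<longleftrightarrow> recursive_fun (\<lambda>x. if P x then 1 else 0)"

lemma recursive_fun_if: "decidable_pred P \<Longrightarrow> recursive_fun f \<Longrightarrow> recursive_fun g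
    \<Longrightarrow> recursive_fun (\<lambda>x. if P x then f x else g x)"
proof -
  assume P: "decidable_pred P" and f: "recursive_fun f" and g: "recursive_fun g"
  have "recursive_fun (\<lambda>x. (if P x then 1 else 0) * f x + (1 - (if P x then 1 else 0)) * g x)"
    using P f g unfolding decidable_pred_def
    by (intro recursive_fun_add recursive_fun_mult recursive_fun_sub recursive_fun_const)
  moreover have "(\<lambda>x. (if P x then 1 else 0) * f x + (1 - (if P x then 1 else 0)) * g x)
      = (\<lambda>x. if P x then f x else g x)"
    by (rule HOL.ext) simp
  ultimately show ?thesis by simp
qed

lemma decidable_pred_eq: "recursive_fun f \<Longrightarrow> recursive_fun g \<Longrightarrow> decidable_pred (\<lambda>x. f x = g x)"
proof -
  assume f: "recursive_fun f" and g: "recursive_fun g"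
  have "recursive_fun (\<lambda>x. 1 - ((f x - g x) + (g x - f x)))"
    using f g by (intro recursive_fun_add recursive_fun_sub recursive_fun_const)
  moreover have "(\<lambda>x. 1 - ((f x - g x) + (g x - f x))) = (\<lambda>x. if f x = g x then 1 else 0)"
    by (rule HOL.ext) auto
  ultimately show ?thesis unfolding decidable_pred_def by simp
qed

lemma decidable_pred_less: "recursive_fun f \<Longrightarrow> recursive_fun g \<Longrightarrow> decidable_pred (\<lambda>x. f x < g x)"
proof -
  assume f: "recursive_fun f" and g: "recursive_fun g"
  have "recursive_fun (\<lambda>x. 1 - (Suc (f x) - g x))"
    using f g by (intro recursive_fun_Suc recursive_fun_sub recursive_fun_const)
  moreover have "(\<lambda>x. 1 - (Suc (f x) - g x)) = (\<lambda>x. if f x < g x then 1 else 0)"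
    by (rule HOL.ext) auto
  ultimately show ?thesis unfolding decidable_pred_def by simp
qed

lemma decidable_pred_not: "decidable_pred P \<Longrightarrow> decidable_pred (\<lambda>x. \<not> P x)"
proof -
  assume P: "decidable_pred P"
  have "recursive_fun (\<lambda>x. 1 - (if P x then 1 else 0))"
    using P unfolding decidable_pred_def by (intro recursive_fun_sub recursive_fun_const)
  moreover have "(\<lambda>x. 1 - (if P x then 1 else 0)) = (\<lambda>x. if \<not> P x then 1 else (0::nat))"
    by (rule HOL.ext) auto
  ultimately show ?thesis unfolding decidable_pred_def by simp
qed

lemma decidable_pred_le: "recursive_fun f \<Longrightarrow> recursive_fun g \<Longrightarrow> decidable_pred (\<lambda>x. f x \<le> g x)"
  using decidable_pred_not[OF decidable_pred_less, of g f] by (simp add: not_less)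

lemma decidable_pred_conj: "decidable_pred P \<Longrightarrow> decidable_pred Q \<Longrightarrow> decidable_pred (\<lambda>x. P x \<and> Q x)"
proof -
  assume P: "decidable_pred P" and Q: "decidable_pred Q"
  have "recursive_fun (\<lambda>x. (if P x then 1 else 0) * (if Q x then 1 else 0))"
    using P Q unfolding decidable_pred_def by (intro recursive_fun_mult)
  moreover have "(\<lambda>x. (if P x then 1 else 0) * (if Q x then 1 else (0::nat)))
      = (\<lambda>x. if P x \<and> Q x then 1 else 0)"
    by (rule HOL.ext) auto
  ultimately show ?thesis unfolding decidable_pred_def by simp
qed

lemma decidable_pred_disj: "decidable_pred P \<Longrightarrow> decidable_pred Q \<Longrightarrow> decidable_pred (\<lambda>x. P x \<or> Q x)"
  using decidable_pred_not[OF decidable_pred_conj[OF decidable_pred_not decidable_pred_not], of P Q]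
  by simp

lemma decidable_pred_imp: "decidable_pred P \<Longrightarrow> decidable_pred Q \<Longrightarrow> decidable_pred (\<lambda>x. P x \<longrightarrow> Q x)"
  using decidable_pred_disj[OF decidable_pred_not, of P Q] by simp

lemma decidable_pred_app2: "decidable_pred (\<lambda>p. P (unpair_fst p) (unpair_snd p)) \<Longrightarrow> recursive_fun f
    \<Longrightarrow> recursive_fun g \<Longrightarrow> decidable_pred (\<lambda>x. P (f x) (g x))"
  unfolding decidable_pred_def using recursive_fun_app2[of "\<lambda>a b. if P a b then 1 else 0" f g]
  unfolding recursive_fun2_def by simp

lemma decidable_pred_comp: "decidable_pred P \<Longrightarrow> recursive_fun f \<Longrightarrow> decidable_pred (\<lambda>x. P (f x))"
  unfolding decidable_pred_def using recursive_fun_comp[of "\<lambda>a. if P a then 1 else 0" f] by simp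

lemma recursive_fun_bounded_Least:
  assumes f: "recursive_fun f" and P: "decidable_pred (\<lambda>p. P (unpair_fst p) (unpair_snd p))"
  shows "recursive_fun (\<lambda>x. LEAST i. i = f x \<or> P i x)"
proof -
  have "recursive_fun2 (\<lambda>y x. if y = f x \<or> P y x then 0 else 1)"
    unfolding recursive_fun2_def
    by (intro recursive_fun_if decidable_pred_disj decidable_pred_eq recursive_fun_unpair_fst
        recursive_fun_comp[OF f] recursive_fun_unpair_snd recursive_fun_id recursive_fun_const P)
  moreover have ex: "\<And>x. \<exists>y. (if y = f x \<or> P y x then 0 else 1) = (0::nat)" by auto
  ultimately have r: "recursive_fun (\<lambda>x. LEAST y. (if y = f x \<or> P y x then 0 else 1) = (0::nat))"
    by (rule recursive_fun_Least)
  have eq: "\<And>x y. ((if y = f x \<or> P y x then 0 else 1) = (0::nat)) = (y = f x \<or> P y x)" by simp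
  show ?thesis using r unfolding eq .
qed

lemma all_less_iff_Least: "(\<forall>i<(n::nat). P i) \<longleftrightarrow> (LEAST i. i = n \<or> \<not> P i) = n"
proof
  assume a: "\<forall>i<n. P i"
  show "(LEAST i. i = n \<or> \<not> P i) = n"
  proof (rule Least_equality)
    show "n = n \<or> \<not> P n" by simp
    fix y assume "y = n \<or> \<not> P y"
    then show "n \<le> y" using a by (metis not_less order_refl)
  qed
next
  assume L: "(LEAST i. i = n \<or> \<not> P i) = n"
  show "\<forall>i<n. P i"
  proof (intro allI impI, rule ccontr)
    fix i assume "i < n" "\<not> P i"
    then have "(LEAST i. i = n \<or> \<not> P i) \<le> i" by (intro Least_le) simp
    then show False using L \<open>i < n\<close> by simp
  qed
qed

lemma decidable_pred_all_less:
  assumes f: "recursive_fun f" and P: "decidable_pred (\<lambda>p. P (unpair_fst p) (unpair_snd p))"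
  shows "decidable_pred (\<lambda>x. \<forall>i<f x. P i x)"
proof -
  have "decidable_pred (\<lambda>x. (LEAST i. i = f x \<or> \<not> P i x) = f x)"
    by (intro decidable_pred_eq f recursive_fun_bounded_Least decidable_pred_not P)
  then show ?thesis by (subst all_less_iff_Least)
qed

lemma decidable_pred_ex_less:
  assumes f: "recursive_fun f" and P: "decidable_pred (\<lambda>p. P (unpair_fst p) (unpair_snd p))"
  shows "decidable_pred (\<lambda>x. \<exists>i<f x. P i x)"
proof -
  have "decidable_pred (\<lambda>x. \<not> (\<forall>i<f x. \<not> P i x))"
    by (intro decidable_pred_not decidable_pred_all_less f P)
  then show ?thesis by simp
qed

lemmas recursive_intros =
  recursive_fun_id recursive_fun_const recursive_fun_Suc recursive_fun_add recursive_fun_sub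
  recursive_fun_mult recursive_fun_prod_encode recursive_fun_unpair_fst recursive_fun_unpair_snd
  recursive_fun_if recursive_fun_bounded_Least
  decidable_pred_eq decidable_pred_less decidable_pred_le decidable_pred_not decidable_pred_conj
  decidable_pred_disj decidable_pred_imp decidable_pred_all_less decidable_pred_ex_less

lemma even_iff_eq_2_mult_div_2: "even (a::nat) \<longleftrightarrow> a = 2 * (a div 2)"
  by presburger

lemma div_2_Least: "(a::nat) div 2 = (LEAST q. q = a \<or> a < 2*q+2)"
  by (rule sym, rule Least_equality) auto

lemma recursive_fun_div_2: "recursive_fun f \<Longrightarrow> recursive_fun (\<lambda>x. f x div 2)"
proof -
  assume f: "recursive_fun f"
  have "recursive_fun (\<lambda>x. LEAST q. q = f x \<or> f x < 2*q+2)"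
    by (intro recursive_fun_bounded_Least f decidable_pred_less recursive_fun_comp[OF f]
        recursive_intros)
  then show ?thesis by (simp add: div_2_Least)
qed

section \<open>Lists coded as numbers\<close>

text \<open>Since \<open>list_encode (x # xs) = Suc (prod_encode (x, list_encode xs))\<close>, head and tail of the
  list coded by \<open>c\<close> are read off \<open>c - 1\<close>.\<close>
definition code_tl :: "nat \<Rightarrow> nat" where "code_tl c = unpair_snd (c - 1)"

definition code_hd :: "nat \<Rightarrow> nat" where "code_hd c = unpair_fst (c - 1)"

lemma prod_decode_0: "prod_decode 0 = (0,0)"
  unfolding prod_decode_def by (subst prod_decode_aux.simps) simp

lemma list_decode_code_tl: "list_decode (code_tl c) = tl (list_decode c)"
proof (cases c)
  case 0 then show ?thesis by (simp add: code_tl_def unpair_snd_def prod_decode_0)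
next
  case (Suc n) then show ?thesis by (simp add: code_tl_def unpair_snd_def split: prod.split)
qed

lemma list_decode_eq_Nil_iff: "list_decode x = [] \<longleftrightarrow> x = 0"
proof
  assume "list_decode x = []"
  then have "list_encode (list_decode x) = 0" by simp
  then show "x = 0" by simp
qed simp

lemma code_hd_eq: "c \<noteq> 0 \<Longrightarrow> code_hd c = hd (list_decode c)"
  by (cases c) (auto simp: code_hd_def unpair_fst_def split: prod.split)

lemma list_decode_code_tl_pow: "list_decode ((code_tl^^i) c) = drop i (list_decode c)"
  by (induction i) (auto simp: list_decode_code_tl drop_Suc tl_drop)

definition code_nth :: "nat \<Rightarrow> nat \<Rightarrow> nat" where "code_nth c i = code_hd ((code_tl^^i) c)"

lemma code_nth_eq: "i < length (list_decode c) \<Longrightarrow> code_nth c i = list_decode c ! i"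
proof -
  assume i: "i < length (list_decode c)"
  have d: "list_decode ((code_tl^^i) c) = drop i (list_decode c)" by (rule list_decode_code_tl_pow)
  have ne: "drop i (list_decode c) \<noteq> []" using i by simp
  have "(code_tl^^i) c \<noteq> 0"
  proof
    assume "(code_tl^^i) c = 0"
    then have "list_decode ((code_tl^^i) c) = []" by simp
    then show False using d ne by simp
  qed
  then have "code_nth c i = hd (drop i (list_decode c))"
    unfolding code_nth_def using d by (simp add: code_hd_eq)
  then show ?thesis using i by (simp add: hd_drop_conv_nth)
qed

lemma length_le_list_encode: "length xs \<le> list_encode xs"
proof (induction xs)
  case (Cons x xs) then show ?case using le_prod_encode_2[of "list_encode xs" x] by simp
qed simp

definition code_length :: "nat \<Rightarrow> nat" where "code_length c = length (list_decode c)"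

lemma code_length_Least: "code_length c = (LEAST i. i = c \<or> (code_tl^^i) c = 0)"
proof -
  have z: "(code_tl^^i) c = 0 \<longleftrightarrow> code_length c \<le> i" for i
    using list_decode_code_tl_pow[of i c] list_decode_eq_Nil_iff[of "(code_tl^^i) c"]
    by (auto simp: code_length_def)
  have le: "code_length c \<le> c"
    using length_le_list_encode[of "list_decode c"] by (simp add: code_length_def)
  show ?thesis
  proof (rule sym, rule Least_equality)
    show "code_length c = c \<or> (code_tl ^^ code_length c) c = 0" using z by simp
    fix y assume "y = c \<or> (code_tl ^^ y) c = 0"
    then show "code_length c \<le> y" using z le by auto
  qed
qed

lemma recursive_fun_code_tl: "recursive_fun f \<Longrightarrow> recursive_fun (\<lambda>x. code_tl (f x))"
  unfolding code_tl_def by (intro recursive_intros)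

lemma recursive_fun_code_hd: "recursive_fun f \<Longrightarrow> recursive_fun (\<lambda>x. code_hd (f x))"
  unfolding code_hd_def by (intro recursive_intros)

lemma recursive_fun2_code_tl_pow: "recursive_fun2 (\<lambda>n x. (code_tl^^n) x)"
  apply (rule recursive_fun2_prim_rec[where b="\<lambda>x. x" and s="\<lambda>n r x. code_tl r"])
     apply (rule recursive_fun_id)
    apply (unfold recursive_fun3_def, intro recursive_fun_code_tl recursive_intros)
   apply simp_all
  done

lemma recursive_fun_code_tl_pow: "recursive_fun f \<Longrightarrow> recursive_fun g
    \<Longrightarrow> recursive_fun (\<lambda>x. (code_tl^^(f x)) (g x))"
  by (rule recursive_fun_app2[OF recursive_fun2_code_tl_pow])

lemma recursive_fun_code_nth: "recursive_fun f \<Longrightarrow> recursive_fun g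
    \<Longrightarrow> recursive_fun (\<lambda>x. code_nth (f x) (g x))"
  unfolding code_nth_def by (intro recursive_fun_code_hd recursive_fun_code_tl_pow)

lemma recursive_fun_code_length: "recursive_fun f \<Longrightarrow> recursive_fun (\<lambda>x. code_length (f x))"
proof -
  assume f: "recursive_fun f"
  have "recursive_fun (\<lambda>x. LEAST i. i = f x \<or> (code_tl^^i) (f x) = 0)"
    by (intro recursive_fun_bounded_Least f decidable_pred_eq recursive_fun_code_tl_pow
        recursive_fun_unpair_fst recursive_fun_unpair_snd recursive_fun_comp[OF f]
        recursive_fun_id recursive_fun_const)
  then show ?thesis by (simp add: code_length_Least)
qed

lemma foldr_drop_Suc:
  "n < length l \<Longrightarrow>
    foldr F (drop (length l - Suc n) l) z = F (l ! (length l - Suc n)) (foldr F (drop (length l - n) l) z)"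
proof -
  assume n: "n < length l"
  have "drop (length l - Suc n) l = l ! (length l - Suc n) # drop (Suc (length l - Suc n)) l"
    using n by (simp add: Cons_nth_drop_Suc)
  moreover have "Suc (length l - Suc n) = length l - n" using n by simp
  ultimately show ?thesis by simp
qed

lemma recursive_fun_foldr:
  assumes F: "recursive_fun3 F" and W: "recursive_fun W" and z: "recursive_fun z"
  shows "recursive_fun (\<lambda>x. foldr (F x) (list_decode (W x)) (z x))"
proof -
  define R where "R n x = foldr (F x) (drop (code_length (W x) - n) (list_decode (W x))) (z x)"
      for n x
  have R0: "R 0 x = z x" for x by (simp add: R_def code_length_def)
  have RS: "R (Suc n) x = (\<lambda>n r x. if n < code_length (W x)
      then F x (code_nth (W x) (code_length (W x) - Suc n)) r else r) n (R n x) x" for n x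
  proof (cases "n < code_length (W x)")
    case True
    then show ?thesis unfolding R_def using foldr_drop_Suc[of n "list_decode (W x)" "F x" "z x"]
      by (simp add: code_length_def code_nth_eq)
  next
    case False
    then show ?thesis by (simp add: R_def)
  qed
  have s: "recursive_fun3 (\<lambda>n r x. if n < code_length (W x)
      then F x (code_nth (W x) (code_length (W x) - Suc n)) r else r)"
    unfolding recursive_fun3_def
    by (intro recursive_intros recursive_fun_app3[OF F] recursive_fun_code_length
        recursive_fun_code_nth recursive_fun_comp[OF W])
  have R: "recursive_fun2 R" by (rule recursive_fun2_prim_rec[OF z s R0 RS])
  have "recursive_fun (\<lambda>x. R (code_length (W x)) x)"
    by (intro recursive_fun_app2[OF R] recursive_fun_code_length W recursive_fun_id)
  then show ?thesis by (simp add: R_def)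
qed

lemma decidable_pred_list_all:
  assumes f: "recursive_fun f" and P: "decidable_pred (\<lambda>p. P (unpair_fst p) (unpair_snd p))"
  shows "decidable_pred (\<lambda>x. \<forall>v\<in>set (list_decode (f x)). P v x)"
proof -
  have "decidable_pred (\<lambda>x. \<forall>i<code_length (f x). P (code_nth (f x) i) x)"
    by (intro decidable_pred_all_less recursive_fun_code_length f decidable_pred_app2[OF P]
        recursive_fun_code_nth recursive_fun_comp[OF f] recursive_intros)
  then show ?thesis by (simp add: all_set_conv_all_nth code_length_def code_nth_eq)
qed

fun list_code_bound :: "nat \<Rightarrow> nat \<Rightarrow> nat" where
  "list_code_bound 0 b = 0"
| "list_code_bound (Suc l) b = Suc (prod_encode (b, list_code_bound l b))"

lemma recursive_fun2_list_code_bound: "recursive_fun2 list_code_bound"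
  apply (rule recursive_fun2_prim_rec[where b="\<lambda>x. 0" and s="\<lambda>n r x. Suc (prod_encode (x, r))"])
     apply (rule recursive_fun_const)
    apply (unfold recursive_fun3_def, intro recursive_intros)
   apply simp_all
  done

lemma recursive_fun_list_code_bound: "recursive_fun f \<Longrightarrow> recursive_fun g
    \<Longrightarrow> recursive_fun (\<lambda>x. list_code_bound (f x) (g x))"
  by (rule recursive_fun_app2[OF recursive_fun2_list_code_bound])

lemma list_encode_le_list_code_bound:
  "length xs \<le> l \<Longrightarrow> \<forall>x\<in>set xs. x \<le> b \<Longrightarrow> list_encode xs \<le> list_code_bound l b"
proof (induction xs arbitrary: l)
  case Nil then show ?case by simp
next
  case (Cons x xs)
  then obtain l' where l: "l = Suc l'" by (cases l) auto
  have "list_encode xs \<le> list_code_bound l' b" using Cons l by simp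
  then have "prod_encode (x, list_encode xs) \<le> prod_encode (b, list_code_bound l' b)"
    using Cons by (intro prod_encode_mono) auto
  then show ?case using l by simp
qed

lemma foldr_list_encode:
  "foldr (\<lambda>x acc. Suc (prod_encode (x, acc))) xs (list_encode ys) = list_encode (xs @ ys)"
  by (induction xs) simp_all

lemma recursive_fun_concat_map:
  assumes f: "recursive_fun (\<lambda>a. list_encode (f a))"
  shows "recursive_fun (\<lambda>y. list_encode (concat (map f (list_decode y))))"
proof -
  define F where "F = (\<lambda>q::nat. \<lambda>a acc. foldr (\<lambda>x acc. Suc (prod_encode (x, acc))) (f a) acc)"
  have "recursive_fun3 (\<lambda>q::nat. \<lambda>x acc. Suc (prod_encode (x, acc)))"
    unfolding recursive_fun3_def by (intro recursive_intros)
  moreover have "recursive_fun (\<lambda>q. list_encode (f (unpair_fst (unpair_snd q))))"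
    by (intro recursive_fun_comp[OF f] recursive_intros)
  moreover have "recursive_fun (\<lambda>q. unpair_snd (unpair_snd q))"
    by (intro recursive_intros)
  ultimately have "recursive_fun (\<lambda>q. foldr (\<lambda>x acc. Suc (prod_encode (x, acc)))
      (list_decode (list_encode (f (unpair_fst (unpair_snd q))))) (unpair_snd (unpair_snd q)))"
    by (rule recursive_fun_foldr)
  then have "recursive_fun3 F"
    by (simp add: recursive_fun3_def F_def)
  from recursive_fun_foldr[OF this recursive_fun_id recursive_fun_const[of 0]]
  have "recursive_fun (\<lambda>y. foldr (F y) (list_decode y) 0)" .
  moreover have "foldr (F y) w 0 = list_encode (concat (map f w))" for y w
    by (induction w) (simp_all add: F_def foldr_list_encode)
  ultimately show ?thesis by simp
qed

lemma code_nth_out_of_range: "code_length c \<le> i \<Longrightarrow> code_nth c i = 0"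
proof -
  assume "code_length c \<le> i"
  then have "list_decode ((code_tl^^i) c) = []"
    using list_decode_code_tl_pow[of i c] by (simp add: code_length_def)
  then show ?thesis
    using list_decode_eq_Nil_iff by (simp add: code_nth_def code_hd_def unpair_fst_def prod_decode_0)
qed

text \<open>
  A table \<open>t\<close> is coded by \<open>list_encode (map list_encode t)\<close>; the operations below work on such
  codes. The bounded searches in \<open>code_one\<close> and \<open>code_inv\<close> return \<open>code_length T\<close> when they fail;
  on valid tables they find the unit and the inverses (lemmas \<open>code_one_eq\<close>, \<open>code_inv_eq\<close>).
\<close>

definition code_entry :: "nat \<Rightarrow> nat \<Rightarrow> nat \<Rightarrow> nat" where
  "code_entry T a b = code_nth (code_nth T a) b"

definition code_is_unit :: "nat \<Rightarrow> nat \<Rightarrow> bool" where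
  "code_is_unit T e \<longleftrightarrow> (\<forall>a<code_length T. code_entry T e a = a \<and> code_entry T a e = a)"

definition code_one :: "nat \<Rightarrow> nat" where
  "code_one T = (LEAST e. e = code_length T \<or> code_is_unit T e)"

definition code_inv :: "nat \<Rightarrow> nat \<Rightarrow> nat" where
  "code_inv T a = (LEAST b. b = code_length T \<or> code_entry T a b = code_one T)"

definition code_letter :: "nat \<Rightarrow> nat \<Rightarrow> nat \<Rightarrow> nat" where
  "code_letter T F a = (if even a then code_nth F (a div 2) else code_inv T (code_nth F (a div 2)))"

definition code_eval :: "nat \<Rightarrow> nat \<Rightarrow> nat \<Rightarrow> nat" where
  "code_eval T F W = foldr (\<lambda>a acc. code_entry T (code_letter T F a) acc) (list_decode W) (code_one T)"

definition code_rows_ok :: "nat \<Rightarrow> bool" where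
  "code_rows_ok T \<longleftrightarrow> (\<forall>a<code_length T. code_length (code_nth T a) = code_length T
      \<and> (\<forall>b<code_length T. code_entry T a b < code_length T))"

definition code_valid_table :: "nat \<Rightarrow> bool" where
  "code_valid_table T \<longleftrightarrow> code_rows_ok T \<and> (\<exists>e<code_length T. code_is_unit T e)
     \<and> (\<forall>a<code_length T. \<forall>b<code_length T. \<forall>c<code_length T.
          code_entry T (code_entry T a b) c = code_entry T a (code_entry T b c))
     \<and> (\<forall>e<code_length T. code_is_unit T e \<longrightarrow>
          (\<forall>a<code_length T. \<exists>b<code_length T. code_entry T a b = e \<and> code_entry T b a = e))"

lemma recursive_fun_code_entry: "recursive_fun f \<Longrightarrow> recursive_fun g \<Longrightarrow> recursive_fun h
    \<Longrightarrow> recursive_fun (\<lambda>x. code_entry (f x) (g x) (h x))"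
  unfolding code_entry_def by (intro recursive_fun_code_nth)

lemma decidable_pred_code_is_unit: "recursive_fun f \<Longrightarrow> recursive_fun g
    \<Longrightarrow> decidable_pred (\<lambda>x. code_is_unit (f x) (g x))"
proof -
  assume f: "recursive_fun f" and g: "recursive_fun g"
  show ?thesis unfolding code_is_unit_def
    by (intro decidable_pred_all_less recursive_fun_code_length f decidable_pred_conj
        decidable_pred_eq recursive_fun_code_entry recursive_fun_comp[OF f] recursive_fun_comp[OF g]
        recursive_intros)
qed

lemma recursive_fun_code_one: "recursive_fun f \<Longrightarrow> recursive_fun (\<lambda>x. code_one (f x))"
proof -
  assume f: "recursive_fun f"
  show ?thesis unfolding code_one_def
    by (intro recursive_fun_bounded_Least recursive_fun_code_length f decidable_pred_code_is_unit
        recursive_fun_comp[OF f] recursive_intros)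
qed

lemma recursive_fun_code_inv: "recursive_fun f \<Longrightarrow> recursive_fun g
    \<Longrightarrow> recursive_fun (\<lambda>x. code_inv (f x) (g x))"
proof -
  assume f: "recursive_fun f" and g: "recursive_fun g"
  show ?thesis unfolding code_inv_def
    by (intro recursive_fun_bounded_Least recursive_fun_code_length f decidable_pred_eq
        recursive_fun_code_entry recursive_fun_code_one recursive_fun_comp[OF f]
        recursive_fun_comp[OF g] recursive_intros)
qed

lemma recursive_fun_code_letter: "recursive_fun f \<Longrightarrow> recursive_fun g \<Longrightarrow> recursive_fun h
    \<Longrightarrow> recursive_fun (\<lambda>x. code_letter (f x) (g x) (h x))"
proof -
  assume f: "recursive_fun f" and g: "recursive_fun g" and h: "recursive_fun h"
  show ?thesis unfolding code_letter_def even_iff_eq_2_mult_div_2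
    by (intro recursive_fun_if decidable_pred_eq h recursive_fun_mult recursive_fun_div_2
        recursive_fun_code_nth g recursive_fun_code_inv f recursive_intros)
qed

lemma recursive_fun3_code_eval: "recursive_fun3 code_eval"
proof -
  have F: "recursive_fun3
      (\<lambda>q a acc. code_entry (unpair_fst q) (code_letter (unpair_fst q) (unpair_fst (unpair_snd q)) a) acc)"
    unfolding recursive_fun3_def
    by (intro recursive_fun_code_entry recursive_fun_code_letter recursive_intros)
  have W: "recursive_fun (\<lambda>q. unpair_snd (unpair_snd q))"
    by (intro recursive_intros)
  have z: "recursive_fun (\<lambda>q. code_one (unpair_fst q))"
    by (intro recursive_fun_code_one recursive_intros)
  from recursive_fun_foldr[OF F W z] show ?thesis unfolding recursive_fun3_def code_eval_def by simp
qed

lemma recursive_fun_code_eval: "recursive_fun f \<Longrightarrow> recursive_fun g \<Longrightarrow> recursive_fun h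
    \<Longrightarrow> recursive_fun (\<lambda>x. code_eval (f x) (g x) (h x))"
  by (rule recursive_fun_app3[OF recursive_fun3_code_eval])

lemma decidable_pred_code_rows_ok: "recursive_fun f \<Longrightarrow> decidable_pred (\<lambda>x. code_rows_ok (f x))"
proof -
  assume f: "recursive_fun f"
  show ?thesis unfolding code_rows_ok_def
    by (intro decidable_pred_all_less recursive_fun_code_length f decidable_pred_conj
        decidable_pred_eq decidable_pred_less recursive_fun_code_entry recursive_fun_code_nth
        recursive_fun_comp[OF f] recursive_intros)
qed

lemma decidable_pred_code_valid_table:
  "recursive_fun f \<Longrightarrow> decidable_pred (\<lambda>x. code_valid_table (f x))"
proof -
  assume f: "recursive_fun f"
  show ?thesis unfolding code_valid_table_def
    by (intro decidable_pred_conj decidable_pred_code_rows_ok f decidable_pred_ex_less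
        decidable_pred_all_less recursive_fun_code_length decidable_pred_code_is_unit
        decidable_pred_imp decidable_pred_eq recursive_fun_code_entry recursive_fun_comp[OF f]
        recursive_intros)
qed

section \<open>Groups given by multiplication tables\<close>

lemma table_group_carrier[simp]: "carrier (table_group t) = {..<length t}"
  by (simp add: table_group_def)

lemma table_group_mult[simp]: "x \<otimes>\<^bsub>table_group t\<^esub> y = t ! x ! y"
  by (simp add: table_group_def)

lemma table_group_one:
  "\<one>\<^bsub>table_group t\<^esub> = (SOME e. e < length t \<and> (\<forall>a<length t. t ! e ! a = a \<and> t ! a ! e = a))"
  by (simp add: table_group_def)

definition table_closed :: "nat list list \<Rightarrow> bool" where
  "table_closed t \<longleftrightarrow> (\<forall>r\<in>set t. length r = length t \<and> (\<forall>x\<in>set r. x < length t))"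

definition table_unit :: "nat list list \<Rightarrow> nat \<Rightarrow> bool" where
  "table_unit t e \<longleftrightarrow> (\<forall>a<length t. t ! e ! a = a \<and> t ! a ! e = a)"

definition table_assoc :: "nat list list \<Rightarrow> bool" where
  "table_assoc t \<longleftrightarrow> (\<forall>a<length t. \<forall>b<length t. \<forall>c<length t. t ! (t ! a ! b) ! c = t ! a ! (t ! b ! c))"

definition table_inverses :: "nat list list \<Rightarrow> bool" where
  "table_inverses t \<longleftrightarrow>
     (\<forall>e<length t. table_unit t e \<longrightarrow> (\<forall>a<length t. \<exists>b<length t. t ! a ! b = e \<and> t ! b ! a = e))"

lemma valid_table_group: "valid_table t \<Longrightarrow> group (table_group t)"
  by (simp add: valid_table_def)

lemma valid_table_closed: "valid_table t \<Longrightarrow> table_closed t"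
  by (simp add: valid_table_def table_closed_def)

lemma valid_table_unit_eq_one:
  assumes v: "valid_table t" and e: "e < length t" "table_unit t e"
  shows "\<one>\<^bsub>table_group t\<^esub> = e"
proof -
  interpret group "table_group t" by (rule valid_table_group[OF v])
  let ?o = "\<one>\<^bsub>table_group t\<^esub>"
  have o: "?o < length t" using one_closed by simp
  have "t ! e ! ?o = ?o" using e o by (simp add: table_unit_def)
  moreover have "t ! e ! ?o = e" using r_one[of e] e by simp
  ultimately show ?thesis by simp
qed

lemma valid_table_one:
  assumes v: "valid_table t"
  shows "\<one>\<^bsub>table_group t\<^esub> < length t \<and> table_unit t \<one>\<^bsub>table_group t\<^esub>"
proof -
  interpret group "table_group t" by (rule valid_table_group[OF v])
  show ?thesis using one_closed l_one r_one by (auto simp: table_unit_def)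
qed

lemma valid_table_iff:
  "valid_table t \<longleftrightarrow>
     table_closed t \<and> (\<exists>e<length t. table_unit t e) \<and> table_assoc t \<and> table_inverses t"
proof
  assume v: "valid_table t"
  interpret group "table_group t" by (rule valid_table_group[OF v])
  have r: "table_closed t" by (rule valid_table_closed[OF v])
  have i: "\<exists>e<length t. table_unit t e" using valid_table_one[OF v] by blast
  have a: "table_assoc t" unfolding table_assoc_def using m_assoc by simp
  have iv: "table_inverses t" unfolding table_inverses_def
  proof (intro allI impI)
    fix e a assume e: "e < length t" "table_unit t e" and a: "a < length t"
    have eo: "\<one>\<^bsub>table_group t\<^esub> = e" by (rule valid_table_unit_eq_one[OF v e])
    have "inv\<^bsub>table_group t\<^esub> a < length t" using a inv_closed[of a] by simp
    moreover have "t ! a ! (inv\<^bsub>table_group t\<^esub> a) = e" "t ! (inv\<^bsub>table_group t\<^esub> a) ! a = e"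
      using r_inv[of a] l_inv[of a] a eo by simp_all
    ultimately show "\<exists>b<length t. t ! a ! b = e \<and> t ! b ! a = e" by blast
  qed
  show "table_closed t \<and> (\<exists>e<length t. table_unit t e) \<and> table_assoc t \<and> table_inverses t"
    using r i a iv by blast
next
  assume h: "table_closed t \<and> (\<exists>e<length t. table_unit t e) \<and> table_assoc t \<and> table_inverses t"
  then have r: "table_closed t" and ex: "\<exists>e. e < length t \<and> table_unit t e"
    and a: "table_assoc t" and iv: "table_inverses t" by auto
  let ?o = "\<one>\<^bsub>table_group t\<^esub>"
  have o: "?o < length t \<and> table_unit t ?o"
    unfolding table_group_one table_unit_def[symmetric] by (rule someI_ex[OF ex])
  have g: "group (table_group t)"
  proof (rule groupI)
    fix x y assume "x \<in> carrier (table_group t)" "y \<in> carrier (table_group t)"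
    then have x: "x < length t" and y: "y < length t" by auto
    have "t ! x \<in> set t" using x by simp
    then show "x \<otimes>\<^bsub>table_group t\<^esub> y \<in> carrier (table_group t)"
      using r y unfolding table_closed_def by auto
  next
    show "?o \<in> carrier (table_group t)" using o by simp
  next
    fix x y z
    assume "x \<in> carrier (table_group t)" "y \<in> carrier (table_group t)" "z \<in> carrier (table_group t)"
    then show "x \<otimes>\<^bsub>table_group t\<^esub> y \<otimes>\<^bsub>table_group t\<^esub> z = x \<otimes>\<^bsub>table_group t\<^esub> (y \<otimes>\<^bsub>table_group t\<^esub> z)"
      using a unfolding table_assoc_def by simp
  next
    fix x assume "x \<in> carrier (table_group t)"
    then show "?o \<otimes>\<^bsub>table_group t\<^esub> x = x" using o by (simp add: table_unit_def)
  next
    fix x assume "x \<in> carrier (table_group t)"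
    then have x: "x < length t" by simp
    then obtain b where "b < length t" "t ! x ! b = ?o" "t ! b ! x = ?o"
      using iv o unfolding table_inverses_def by blast
    then show "\<exists>y\<in>carrier (table_group t). y \<otimes>\<^bsub>table_group t\<^esub> x = ?o" by auto
  qed
  show "valid_table t" using g r unfolding valid_table_def table_closed_def by blast
qed

definition decode_table :: "nat \<Rightarrow> nat list list" where
  "decode_table T = map list_decode (list_decode T)"

lemma length_decode_table[simp]: "length (decode_table T) = code_length T"
  by (simp add: decode_table_def code_length_def)

lemma decode_table_nth: "a < code_length T \<Longrightarrow> decode_table T ! a = list_decode (code_nth T a)"
  by (simp add: decode_table_def code_length_def code_nth_eq)

lemma decode_table_encode: "decode_table (list_encode (map list_encode t)) = t"
  by (simp add: decode_table_def comp_def)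

lemma code_rows_ok_iff: "code_rows_ok T \<longleftrightarrow> table_closed (decode_table T)"
proof -
  have "table_closed (decode_table T) \<longleftrightarrow> (\<forall>a<code_length T. length (decode_table T ! a) = code_length T
      \<and> (\<forall>b<length (decode_table T ! a). decode_table T ! a ! b < code_length T))"
    unfolding table_closed_def all_set_conv_all_nth by simp
  also have "\<dots> \<longleftrightarrow> (\<forall>a<code_length T. code_length (code_nth T a) = code_length T
      \<and> (\<forall>b<code_length (code_nth T a). code_nth (code_nth T a) b < code_length T))"
    by (auto simp: decode_table_nth code_length_def code_nth_eq)
  also have "\<dots> \<longleftrightarrow> code_rows_ok T"
    unfolding code_rows_ok_def code_entry_def by auto
  finally show ?thesis by simp
qed

lemma code_entry_eq: "code_rows_ok T \<Longrightarrow> a < code_length T \<Longrightarrow> b < code_length T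
    \<Longrightarrow> code_entry T a b = decode_table T ! a ! b"
  unfolding code_rows_ok_def code_entry_def by (simp add: decode_table_nth code_nth_eq code_length_def)

lemma code_is_unit_iff: "code_rows_ok T \<Longrightarrow> e < code_length T
    \<Longrightarrow> code_is_unit T e \<longleftrightarrow> table_unit (decode_table T) e"
  unfolding code_is_unit_def table_unit_def by (auto simp: code_entry_eq)

lemma code_valid_table_iff: "code_valid_table T \<longleftrightarrow> valid_table (decode_table T)"
proof (cases "code_rows_ok T")
  case False
  then show ?thesis unfolding code_valid_table_def valid_table_iff code_rows_ok_iff by simp
next
  case True
  have rows_in: "code_entry T a b < code_length T" if "a < code_length T" "b < code_length T" for a b
    using True that unfolding code_rows_ok_def by blast
  have A: "(\<exists>e<code_length T. code_is_unit T e)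
      \<longleftrightarrow> (\<exists>e<length (decode_table T). table_unit (decode_table T) e)"
    using code_is_unit_iff[OF True] by auto
  have B: "(\<forall>a<code_length T. \<forall>b<code_length T. \<forall>c<code_length T.
      code_entry T (code_entry T a b) c = code_entry T a (code_entry T b c))
      \<longleftrightarrow> table_assoc (decode_table T)"
    unfolding table_assoc_def using rows_in by (auto simp: code_entry_eq[OF True])
  have C: "(\<forall>e<code_length T. code_is_unit T e \<longrightarrow>
      (\<forall>a<code_length T. \<exists>b<code_length T. code_entry T a b = e \<and> code_entry T b a = e))
      \<longleftrightarrow> table_inverses (decode_table T)"
  proof -
    have "(\<exists>b<code_length T. code_entry T a b = e \<and> code_entry T b a = e)
        \<longleftrightarrow> (\<exists>b<code_length T. decode_table T ! a ! b = e \<and> decode_table T ! b ! a = e)"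
      if "a < code_length T" for a e
    proof -
      have "\<And>b. b < code_length T
          \<Longrightarrow> code_entry T a b = decode_table T ! a ! b \<and> code_entry T b a = decode_table T ! b ! a"
        using code_entry_eq[OF True] that by blast
      then show ?thesis by metis
    qed
    then show ?thesis
      unfolding table_inverses_def using code_is_unit_iff[OF True] by (simp cong: imp_cong)
  qed
  show ?thesis
    unfolding code_valid_table_def valid_table_iff code_rows_ok_iff[symmetric] using True A B C by simp
qed

lemma code_one_eq:
  assumes v: "valid_table (decode_table T)"
  shows "code_one T = \<one>\<^bsub>table_group (decode_table T)\<^esub>"
proof -
  let ?o = "\<one>\<^bsub>table_group (decode_table T)\<^esub>"
  have r: "code_rows_ok T" using valid_table_closed[OF v] code_rows_ok_iff by simp
  have o: "?o < code_length T" "table_unit (decode_table T) ?o" using valid_table_one[OF v] by auto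
  show ?thesis unfolding code_one_def
  proof (rule Least_equality)
    show "?o = code_length T \<or> code_is_unit T ?o" using o code_is_unit_iff[OF r] by simp
    fix y assume "y = code_length T \<or> code_is_unit T y"
    then show "?o \<le> y"
    proof
      assume "code_is_unit T y"
      show "?o \<le> y"
      proof (cases "y < code_length T")
        case True
        then have "table_unit (decode_table T) y"
          using \<open>code_is_unit T y\<close> code_is_unit_iff[OF r] by simp
        then show ?thesis using valid_table_unit_eq_one[OF v] True by simp
      qed (use o in simp)
    qed (use o in simp)
  qed
qed

lemma code_inv_eq:
  assumes v: "valid_table (decode_table T)" and a: "a < code_length T"
  shows "code_inv T a = inv\<^bsub>table_group (decode_table T)\<^esub> a"
proof -
  interpret group "table_group (decode_table T)" by (rule valid_table_group[OF v])
  let ?H = "table_group (decode_table T)"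
  have r: "code_rows_ok T" using valid_table_closed[OF v] code_rows_ok_iff by simp
  have ac: "a \<in> carrier ?H" using a by simp
  have ic: "inv\<^bsub>?H\<^esub> a < code_length T" using inv_closed[OF ac] by simp
  show ?thesis unfolding code_inv_def
  proof (rule Least_equality)
    show "inv\<^bsub>?H\<^esub> a = code_length T \<or> code_entry T a (inv\<^bsub>?H\<^esub> a) = code_one T"
      using r_inv[OF ac] code_entry_eq[OF r a ic] code_one_eq[OF v] by simp
    fix y assume "y = code_length T \<or> code_entry T a y = code_one T"
    then show "inv\<^bsub>?H\<^esub> a \<le> y"
    proof
      assume y: "code_entry T a y = code_one T"
      show ?thesis
      proof (cases "y < code_length T")
        case True
        then have "a \<otimes>\<^bsub>?H\<^esub> y = \<one>\<^bsub>?H\<^esub>"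
          using y code_entry_eq[OF r a True] code_one_eq[OF v] by simp
        then have "y = inv\<^bsub>?H\<^esub> a"
          using inv_equality[OF inv_comm] ac True by simp
        then show ?thesis by simp
      qed (use ic in simp)
    qed (use ic in simp)
  qed
qed

lemma letter_val_closed:
  assumes "group G" "set ss \<subseteq> carrier G" "a < 2 * length ss"
  shows "letter_val G ss a \<in> carrier G"
proof -
  have "a div 2 < length ss" using assms(3) by simp
  then have "ss ! (a div 2) \<in> carrier G" using assms(2) nth_mem by blast
  then show ?thesis unfolding letter_val_def using group.inv_closed[OF assms(1)] by simp
qed

lemma word_eval_Nil[simp]: "word_eval G ss [] = \<one>\<^bsub>G\<^esub>"
  by (simp add: word_eval_def)

lemma word_eval_Cons[simp]: "word_eval G ss (a # w) = letter_val G ss a \<otimes>\<^bsub>G\<^esub> word_eval G ss w"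
  by (simp add: word_eval_def)

lemma valid_word_Cons[simp]: "valid_word ss (a # w) \<longleftrightarrow> a < 2 * length ss \<and> valid_word ss w"
  by (simp add: valid_word_def)

lemma valid_word_Nil[simp]: "valid_word ss []"
  by (simp add: valid_word_def)

lemma valid_word_append[simp]: "valid_word ss (u @ v) \<longleftrightarrow> valid_word ss u \<and> valid_word ss v"
  by (auto simp add: valid_word_def)

lemma word_eval_closed:
  assumes G: "group G" and ss: "set ss \<subseteq> carrier G" and w: "valid_word ss w"
  shows "word_eval G ss w \<in> carrier G"
proof -
  interpret group G by (rule G)
  from w show ?thesis
    by (induction w) (simp_all add: letter_val_closed[OF G ss])
qed

lemma word_eval_append:
  assumes G: "group G" and ss: "set ss \<subseteq> carrier G" and u: "valid_word ss u" and v: "valid_word ss v"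
  shows "word_eval G ss (u @ v) = word_eval G ss u \<otimes>\<^bsub>G\<^esub> word_eval G ss v"
proof -
  interpret group G by (rule G)
  from u show ?thesis
    by (induction u)
      (simp_all add: word_eval_closed[OF G ss] letter_val_closed[OF G ss] v m_assoc)
qed

lemma valid_table_group_hom:
  "group G \<Longrightarrow> valid_table t \<Longrightarrow> \<psi> \<in> hom G (table_group t) \<Longrightarrow> group_hom G (table_group t) \<psi>"
  by (simp add: group_hom_def group_hom_axioms_def valid_table_group)

lemma code_letter_eq:
  assumes G: "group G" and ss: "set ss \<subseteq> carrier G" and v: "valid_table (decode_table T)"
    and \<psi>: "\<psi> \<in> hom G (table_group (decode_table T))"
    and F: "\<forall>i<length ss. \<psi> (ss ! i) = list_decode Fc ! i" "length (list_decode Fc) = length ss"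
    and a: "a < 2 * length ss"
  shows "code_letter T Fc a = \<psi> (letter_val G ss a)"
proof -
  interpret group_hom G "table_group (decode_table T)" \<psi>
    by (rule valid_table_group_hom[OF G v \<psi>])
  let ?i = "a div 2"
  have i: "?i < length ss" using a by simp
  then have si: "ss ! ?i \<in> carrier G" using ss nth_mem by blast
  have Fi: "code_nth Fc ?i = \<psi> (ss ! ?i)" using F i by (simp add: code_nth_eq)
  show ?thesis
  proof (cases "even a")
    case True
    then show ?thesis
      using Fi by (simp add: code_letter_def letter_val_def)
  next
    case False
    have "\<psi> (ss ! ?i) < code_length T" using hom_closed[OF si] by simp
    then show ?thesis
      using False Fi code_inv_eq[OF v] hom_inv[OF si]
      by (simp add: code_letter_def letter_val_def)
  qed
qed

lemma code_eval_eq: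
  assumes G: "group G" and ss: "set ss \<subseteq> carrier G" and v: "valid_table (decode_table T)"
    and \<psi>: "\<psi> \<in> hom G (table_group (decode_table T))"
    and F: "\<forall>i<length ss. \<psi> (ss ! i) = list_decode Fc ! i" "length (list_decode Fc) = length ss"
    and w: "valid_word ss w"
  shows "\<psi> (word_eval G ss w) = code_eval T Fc (list_encode w)"
proof -
  interpret group_hom G "table_group (decode_table T)" \<psi>
    by (rule valid_table_group_hom[OF G v \<psi>])
  have rows: "code_rows_ok T" using valid_table_closed[OF v] code_rows_ok_iff by simp
  from w have "\<psi> (word_eval G ss w) = foldr (\<lambda>a acc. code_entry T (code_letter T Fc a) acc) w (code_one T)"
  proof (induction w)
    case Nil
    then show ?case using code_one_eq[OF v] by simp
  next
    case (Cons a w)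
    then have a: "a < 2 * length ss" and w: "valid_word ss w" by auto
    have lv: "letter_val G ss a \<in> carrier G" by (rule letter_val_closed[OF G ss a])
    have we: "word_eval G ss w \<in> carrier G" by (rule word_eval_closed[OF G ss w])
    have "\<psi> (word_eval G ss (a # w))
        = \<psi> (letter_val G ss a) \<otimes>\<^bsub>table_group (decode_table T)\<^esub> \<psi> (word_eval G ss w)"
      using hom_mult[OF lv we] by simp
    also have "\<dots> = code_entry T (code_letter T Fc a) (\<psi> (word_eval G ss w))"
      using code_entry_eq[OF rows] hom_closed[OF lv] hom_closed[OF we] code_letter_eq[OF G ss v \<psi> F a]
      by simp
    finally show ?case using Cons.IH[OF w] by simp
  qed
  then show ?thesis unfolding code_eval_def by simp
qed

section \<open>Finite quotients and homomorphisms to table groups\<close>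

definition quotient_detects :: "('a, 'b) monoid_scheme \<Rightarrow> nat \<Rightarrow> 'a \<Rightarrow> bool" where
  "quotient_detects G k g \<longleftrightarrow> (\<exists>N. finite_quot_detects G N g \<and> card (rcosets\<^bsub>G\<^esub> N) \<le> k)"

lemma quotient_detects_mono: "quotient_detects G k g \<Longrightarrow> k \<le> k' \<Longrightarrow> quotient_detects G k' g"
  unfolding quotient_detects_def using le_trans by blast

lemma not_quotient_detects_one: "\<not> quotient_detects G k \<one>\<^bsub>G\<^esub>"
proof
  assume "quotient_detects G k \<one>\<^bsub>G\<^esub>"
  then obtain N where "N \<lhd> G" "\<one>\<^bsub>G\<^esub> \<notin> N"
    by (auto simp: quotient_detects_def finite_quot_detects_def)
  then show False using normal_imp_subgroup subgroup.one_closed by blast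
qed

lemma hom_table_detects:
  assumes G: "group G" and v: "valid_table t" and \<psi>: "\<psi> \<in> hom G (table_group t)"
    and g: "g \<in> carrier G" and ng: "\<psi> g \<noteq> \<one>\<^bsub>table_group t\<^esub>"
  shows "quotient_detects G (length t) g"
proof -
  interpret group_hom G "table_group t" \<psi>
    by (rule valid_table_group_hom[OF G v \<psi>])
  let ?N = "kernel G (table_group t) \<psi>"
  have car: "carrier (G Mod ?N) = rcosets\<^bsub>G\<^esub> ?N" by (simp add: FactGroup_def)
  define E where "E = (\<lambda>Y. the_elem (\<psi> ` Y))"
  have inj: "inj_on E (rcosets\<^bsub>G\<^esub> ?N)"
    using FactGroup_inj_on car unfolding E_def by simp
  have into: "E ` (rcosets\<^bsub>G\<^esub> ?N) \<subseteq> {..<length t}"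
    using FactGroup_the_elem_mem car unfolding E_def by auto
  have "finite (rcosets\<^bsub>G\<^esub> ?N)"
    using finite_image_iff[OF inj] finite_subset[OF into finite_lessThan] by blast
  moreover have "card (rcosets\<^bsub>G\<^esub> ?N) \<le> length t"
    using card_inj_on_le[OF inj into finite_lessThan] by simp
  moreover have "g \<notin> ?N" using ng by (simp add: kernel_def)
  ultimately show ?thesis
    using normal_kernel unfolding quotient_detects_def finite_quot_detects_def by blast
qed

definition enum_table :: "('a, 'b) monoid_scheme \<Rightarrow> (nat \<Rightarrow> 'a) \<Rightarrow> nat \<Rightarrow> nat list list" where
  "enum_table Q h m = map (\<lambda>i. map (\<lambda>j. inv_into {0..<m} h (h i \<otimes>\<^bsub>Q\<^esub> h j)) [0..<m]) [0..<m]"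

lemma length_enum_table [simp]: "length (enum_table Q h m) = m"
  by (simp add: enum_table_def)

lemma
  assumes Q: "group Q" and h: "bij_betw h {0..<m} (carrier Q)"
  shows valid_enum_table: "valid_table (enum_table Q h m)"
    and enum_table_hom: "inv_into {0..<m} h \<in> hom Q (table_group (enum_table Q h m))"
proof -
  interpret Q: group Q by (rule Q)
  define idx where "idx = inv_into {0..<m} h"
  define t where "t = enum_table Q h m"
  have hC: "i < m \<Longrightarrow> h i \<in> carrier Q" for i
    using h by (auto simp: bij_betw_def)
  have idxm: "x \<in> carrier Q \<Longrightarrow> idx x < m" for x
    using h unfolding idx_def by (metis atLeastLessThan_iff bij_betw_def inv_into_into)
  have hidx: "x \<in> carrier Q \<Longrightarrow> h (idx x) = x" for x
    using h unfolding idx_def by (simp add: bij_betw_def f_inv_into_f)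
  have idxh: "i < m \<Longrightarrow> idx (h i) = i" for i
    using h unfolding idx_def by (simp add: bij_betw_def inv_into_f_f)
  have lt: "length t = m" by (simp add: t_def)
  have tij: "i < m \<Longrightarrow> j < m \<Longrightarrow> t ! i ! j = idx (h i \<otimes>\<^bsub>Q\<^esub> h j)" for i j
    by (simp add: t_def enum_table_def idx_def)
  define e where "e = idx \<one>\<^bsub>Q\<^esub>"
  have em: "e < m" and he: "h e = \<one>\<^bsub>Q\<^esub>" unfolding e_def by (simp_all add: idxm hidx)
  have unit: "table_unit t e"
    unfolding table_unit_def lt
  proof (intro allI impI conjI)
    fix a assume a: "a < m"
    show "t ! e ! a = a" using tij[OF em a] he Q.l_one[OF hC[OF a]] idxh[OF a] by simp
    show "t ! a ! e = a" using tij[OF a em] he Q.r_one[OF hC[OF a]] idxh[OF a] by simp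
  qed
  have closed: "table_closed t"
    unfolding table_closed_def lt
    by (auto simp: t_def enum_table_def idx_def[symmetric] intro!: idxm hC)
  have assoc: "table_assoc t"
    unfolding table_assoc_def lt
  proof (intro allI impI)
    fix a b c assume a: "a < m" and b: "b < m" and c: "c < m"
    have ab: "t ! a ! b < m" "t ! b ! c < m"
      using tij[OF a b] tij[OF b c] idxm hC a b c by auto
    show "t ! (t ! a ! b) ! c = t ! a ! (t ! b ! c)"
      using tij[OF ab(1) c] tij[OF a ab(2)] tij[OF a b] tij[OF b c] hidx hC a b c
        Q.m_assoc[OF hC[OF a] hC[OF b] hC[OF c]] by simp
  qed
  have inverses: "table_inverses t"
    unfolding table_inverses_def lt
  proof (intro allI impI)
    fix e' a assume e': "e' < m" "table_unit t e'" and a: "a < m"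
    have "t ! e' ! e = e" "t ! e' ! e = e'"
      using e' unit em lt unfolding table_unit_def by blast+
    then have "e' = e" by simp
    define b where "b = idx (inv\<^bsub>Q\<^esub> h a)"
    have b: "b < m" "h b = inv\<^bsub>Q\<^esub> h a"
      using hC[OF a] by (simp_all add: b_def idxm hidx)
    then have "t ! a ! b = e" "t ! b ! a = e"
      using tij[OF a b(1)] tij[OF b(1) a] hC[OF a] by (simp_all add: e_def)
    then show "\<exists>b<m. t ! a ! b = e' \<and> t ! b ! a = e'"
      using b(1) \<open>e' = e\<close> by blast
  qed
  show "valid_table (enum_table Q h m)"
    using closed unit em lt assoc inverses unfolding valid_table_iff t_def by auto
  show "inv_into {0..<m} h \<in> hom Q (table_group (enum_table Q h m))"
    unfolding idx_def[symmetric] t_def[symmetric]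
    by (rule homI) (simp_all add: idxm lt tij hidx)
qed

lemma finite_quotient_table:
  assumes G: "group G" and N: "finite_quot_detects G N g" and g: "g \<in> carrier G"
  obtains t \<psi> where "valid_table t" "\<psi> \<in> hom G (table_group t)" "\<psi> g \<noteq> \<one>\<^bsub>table_group t\<^esub>"
    "length t = card (rcosets\<^bsub>G\<^esub> N)"
proof -
  from N have fin: "finite (rcosets\<^bsub>G\<^esub> N)" and gN: "g \<notin> N"
    by (simp_all add: finite_quot_detects_def)
  interpret N: normal N G
    using N by (simp add: finite_quot_detects_def)
  interpret Q: group "G Mod N"
    by (rule N.factorgroup_is_group)
  define m where "m = card (rcosets\<^bsub>G\<^esub> N)"
  obtain h where h: "bij_betw h {0..<m} (carrier (G Mod N))"
    using ex_bij_betw_nat_finite[OF fin] by (auto simp: m_def FactGroup_def)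
  let ?t = "enum_table (G Mod N) h m" and ?idx = "inv_into {0..<m} h"
  define \<psi> where "\<psi> = ?idx \<circ> (\<lambda>x. N #>\<^bsub>G\<^esub> x)"
  have hom: "\<psi> \<in> hom G (table_group ?t)"
    unfolding \<psi>_def by (rule hom_compose[OF N.r_coset_hom_Mod enum_table_hom[OF Q.is_group h]])
  interpret group_hom G "table_group ?t" \<psi>
    by (rule valid_table_group_hom[OF G valid_enum_table[OF Q.is_group h] hom])
  have inj: "inj_on ?idx (carrier (G Mod N))"
    using bij_betw_inv_into[OF h] by (rule bij_betw_imp_inj_on)
  have "g \<in> N #>\<^bsub>G\<^esub> g"
    by (rule N.rcos_self[OF g N.subgroup_axioms])
  then have "N #>\<^bsub>G\<^esub> g \<noteq> N #>\<^bsub>G\<^esub> \<one>\<^bsub>G\<^esub>"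
    using gN N.coset_mult_one[OF N.subset] by auto
  then have "?idx (N #>\<^bsub>G\<^esub> g) \<noteq> ?idx (N #>\<^bsub>G\<^esub> \<one>\<^bsub>G\<^esub>)"
    using inj_on_contraD[OF inj] hom_in_carrier[OF N.r_coset_hom_Mod] g by blast
  then have "\<psi> g \<noteq> \<psi> \<one>\<^bsub>G\<^esub>"
    unfolding \<psi>_def comp_def .
  then show thesis
    using that[OF valid_enum_table[OF Q.is_group h] hom] by (simp add: m_def)
qed

lemma generate_word_eval:
  assumes G: "group G" and ss: "set ss \<subseteq> carrier G" and x: "x \<in> generate G (set ss)"
  shows "\<exists>u. valid_word ss u \<and> word_eval G ss u = x"
  using x
proof (induction rule: generate.induct)
  case one
  then show ?case by (intro exI[of _ "[]"]) simp
next
  case (incl h)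
  then obtain i where i: "i < length ss" "ss ! i = h" by (auto simp: in_set_conv_nth)
  have "h \<in> carrier G" using incl ss by blast
  moreover have "letter_val G ss (2*i) = h" unfolding letter_val_def using i by simp
  ultimately show ?case using i G
    by (intro exI[of _ "[2*i]"]) (simp add: group.is_monoid monoid.r_one)
next
  case (inv h)
  then obtain i where i: "i < length ss" "ss ! i = h" by (auto simp: in_set_conv_nth)
  have "inv\<^bsub>G\<^esub> h \<in> carrier G" using inv ss group.inv_closed[OF G] by blast
  moreover have "letter_val G ss (2*i+1) = inv\<^bsub>G\<^esub> h" unfolding letter_val_def using i by simp
  ultimately show ?case using i G
    by (intro exI[of _ "[2*i+1]"]) (simp add: group.is_monoid monoid.r_one)
next
  case (eng h1 h2)
  then obtain u1 u2
    where "valid_word ss u1" "word_eval G ss u1 = h1" "valid_word ss u2" "word_eval G ss u2 = h2"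
    by blast
  then show ?case using word_eval_append[OF G ss] by (intro exI[of _ "u1 @ u2"]) simp
qed

text \<open>Letter by letter: each generator in \<open>ss\<close> and its inverse are replaced by a fixed word over \<open>ss'\<close>.\<close>
lemma gen_list_translation:
  assumes G: "group G" and g: "gen_list G ss" and g': "gen_list G ss'"
  obtains tr where
    "\<And>w. valid_word ss w \<Longrightarrow> valid_word ss' (tr w) \<and> word_eval G ss' (tr w) = word_eval G ss w"
    "recursive_fun (\<lambda>y. list_encode (tr (list_decode y)))"
proof -
  let ?L = "2 * length ss"
  have ssc: "set ss \<subseteq> carrier G" and ss'c: "set ss' \<subseteq> carrier G"
    and gen': "generate G (set ss') = carrier G"
    using g g' by (auto simp: gen_list_def)
  have "\<exists>u. valid_word ss' u \<and> word_eval G ss' u = letter_val G ss a" if "a < ?L" for a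
    using generate_word_eval[OF G ss'c] letter_val_closed[OF G ssc that] gen' by blast
  then obtain Tab
    where Tab: "\<And>a. a < ?L \<Longrightarrow> valid_word ss' (Tab a) \<and> word_eval G ss' (Tab a) = letter_val G ss a"
    by metis
  define f where "f a = (if a < ?L then Tab a else [])" for a
  define tr where "tr w = concat (map f w)" for w
  have "valid_word ss' (tr w) \<and> word_eval G ss' (tr w) = word_eval G ss w" if "valid_word ss w" for w
    using that
  proof (induction w)
    case (Cons a w)
    then show ?case
      using Tab[of a] word_eval_append[OF G ss'c] by (simp add: tr_def f_def)
  qed (simp add: tr_def)
  moreover have "recursive_fun (\<lambda>y. list_encode (tr (list_decode y)))"
    unfolding tr_def
  proof (rule recursive_fun_concat_map)
    define TC where "TC = list_encode (map (list_encode \<circ> Tab) [0..<?L])"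
    have "code_nth TC a = list_encode (f a)" for a
      by (cases "a < ?L") (simp_all add: TC_def f_def code_nth_eq code_nth_out_of_range code_length_def)
    then show "recursive_fun (\<lambda>a. list_encode (f a))"
      using recursive_fun_code_nth[OF recursive_fun_const recursive_fun_id, of TC] by simp
  qed
  ultimately show thesis using that by blast
qed

definition depth_bound :: "('a, 'b) monoid_scheme \<Rightarrow> 'a list \<Rightarrow> nat \<Rightarrow> nat \<Rightarrow> bool" where
  "depth_bound G ss n k \<longleftrightarrow> (\<forall>w. valid_word ss w \<and> length w \<le> n \<and> word_eval G ss w \<noteq> \<one>\<^bsub>G\<^esub>
       \<longrightarrow> quotient_detects G k (word_eval G ss w))"

lemma depth_eq_Least_depth_bound: "depth G ss n = (LEAST k. depth_bound G ss n k)"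
  by (simp add: depth_def depth_bound_def quotient_detects_def)

lemma residually_finite_quotient_detects:
  "residually_finite G \<Longrightarrow> g \<in> carrier G \<Longrightarrow> g \<noteq> \<one>\<^bsub>G\<^esub> \<Longrightarrow> \<exists>k. quotient_detects G k g"
  unfolding residually_finite_def quotient_detects_def by blast

text \<open>There are finitely many words of length at most \<open>n\<close>, and by residual finiteness each nontrivial
  one is detected in some finite quotient; the largest of these orders bounds the depth.\<close>
lemma depth_bound_exists:
  assumes G: "group G" and rf: "residually_finite G" and ss: "set ss \<subseteq> carrier G"
  shows "\<exists>k. depth_bound G ss n k"
proof -
  let ?A = "{w. set w \<subseteq> {..<2 * length ss} \<and> length w \<le> n}"
  have fin: "finite ?A" by (rule finite_lists_length_le) simp
  define K where "K w = (LEAST k. quotient_detects G k (word_eval G ss w))" for w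
  have detects: "quotient_detects G (K w) (word_eval G ss w)"
    if "valid_word ss w" "word_eval G ss w \<noteq> \<one>\<^bsub>G\<^esub>" for w
    unfolding K_def
    using residually_finite_quotient_detects[OF rf word_eval_closed[OF G ss that(1)] that(2)]
    by (rule LeastI_ex)
  have le_Max: "K w \<le> Max (K ` ?A)" if "valid_word ss w" "length w \<le> n" for w
  proof -
    have "w \<in> ?A" using that by (auto simp: valid_word_def)
    then show ?thesis by (rule Max_ge[OF finite_imageI[OF fin] imageI])
  qed
  have "depth_bound G ss n (Max (K ` ?A))"
    unfolding depth_bound_def
  proof (intro allI impI)
    fix w assume w: "valid_word ss w \<and> length w \<le> n \<and> word_eval G ss w \<noteq> \<one>\<^bsub>G\<^esub>"
    show "quotient_detects G (Max (K ` ?A)) (word_eval G ss w)"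
      using quotient_detects_mono[OF detects le_Max] w by blast
  qed
  then show ?thesis ..
qed

lemma depth_bound_depth:
  "group G \<Longrightarrow> residually_finite G \<Longrightarrow> set ss \<subseteq> carrier G \<Longrightarrow> depth_bound G ss n (depth G ss n)"
  unfolding depth_eq_Least_depth_bound by (rule LeastI_ex) (rule depth_bound_exists)

section \<open>Detecting words through the CFQ algorithm\<close>

definition decides_CFQ :: "('a, 'b) monoid_scheme \<Rightarrow> 'a list \<Rightarrow> (nat \<Rightarrow> nat) \<Rightarrow> bool" where
  "decides_CFQ G ss c \<longleftrightarrow> (\<forall>t fl. valid_table t \<and> length fl = length ss \<and> (\<forall>x\<in>set fl. x < length t) \<longrightarrow>
        (c (marked_code t fl) = 1 \<longleftrightarrow> extends_to_hom G ss t fl))"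

lemma CFQ_wrt_iff_decides_CFQ: "CFQ_wrt G ss \<longleftrightarrow> (\<exists>c. recursive_fun c \<and> decides_CFQ G ss c)"
  by (simp add: CFQ_wrt_def decides_CFQ_def)

definition cfq_witness :: "(nat \<Rightarrow> nat) \<Rightarrow> nat \<Rightarrow> nat \<Rightarrow> nat \<Rightarrow> bool" where
  "cfq_witness c L k x \<longleftrightarrow> code_valid_table (unpair_fst x) \<and> code_length (unpair_fst x) \<le> k
      \<and> code_length (unpair_snd x) = L
      \<and> (\<forall>v\<in>set (list_decode (unpair_snd x)). v < code_length (unpair_fst x))
      \<and> c x = 1"

definition cfq_witness_bound :: "nat \<Rightarrow> nat \<Rightarrow> nat" where
  "cfq_witness_bound L k =
     Suc (prod_encode (list_code_bound k (list_code_bound k k), list_code_bound L k))"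

definition table_search_detects :: "(nat \<Rightarrow> nat) \<Rightarrow> nat \<Rightarrow> nat \<Rightarrow> nat \<Rightarrow> bool" where
  "table_search_detects c L k W \<longleftrightarrow>
     (\<exists>x<cfq_witness_bound L k.
        cfq_witness c L k x \<and> code_eval (unpair_fst x) (unpair_snd x) W \<noteq> code_one (unpair_fst x))"

lemma decidable_pred_table_search_detects:
  assumes c: "recursive_fun c" and K: "recursive_fun K" and W: "recursive_fun W"
  shows "decidable_pred (\<lambda>y. table_search_detects c L (K y) (W y))"
  unfolding table_search_detects_def cfq_witness_def cfq_witness_bound_def
  by (intro decidable_pred_ex_less recursive_fun_Suc recursive_fun_prod_encode
      recursive_fun_list_code_bound recursive_fun_comp[OF K] decidable_pred_conj
      decidable_pred_code_valid_table decidable_pred_le decidable_pred_eq decidable_pred_list_all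
      decidable_pred_less recursive_fun_code_length recursive_fun_comp[OF c] decidable_pred_not
      recursive_fun_code_eval recursive_fun_code_one recursive_fun_comp[OF W] recursive_intros)

lemma marked_code_decode: "marked_code (decode_table (unpair_fst x)) (list_decode (unpair_snd x)) = x"
  by (simp add: marked_code_def decode_table_def comp_def)

lemma marked_code_less_cfq_witness_bound:
  assumes "table_closed t" "length t \<le> k" "length fl = L" "\<forall>x\<in>set fl. x < length t"
  shows "marked_code t fl < cfq_witness_bound L k"
proof -
  have "list_encode r \<le> list_code_bound k k" if "r \<in> set t" for r
    using assms(1,2) that unfolding table_closed_def
    by (intro list_encode_le_list_code_bound) (auto intro: less_imp_le order_trans)
  then have "list_encode (map list_encode t) \<le> list_code_bound k (list_code_bound k k)"
    using assms(2) by (intro list_encode_le_list_code_bound) auto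
  moreover have "list_encode fl \<le> list_code_bound L k"
    using assms(2-4) by (intro list_encode_le_list_code_bound) auto
  ultimately show ?thesis
    unfolding marked_code_def cfq_witness_bound_def using prod_encode_mono le_imp_less_Suc by blast
qed

lemma quotient_detects_imp_table_search_detects:
  assumes G: "group G" and ss: "set ss \<subseteq> carrier G" and c: "decides_CFQ G ss c"
    and w: "valid_word ss w" and det: "quotient_detects G k (word_eval G ss w)"
  shows "table_search_detects c (length ss) k (list_encode w)"
proof -
  let ?g = "word_eval G ss w"
  obtain N where N: "finite_quot_detects G N ?g" and Nk: "card (rcosets\<^bsub>G\<^esub> N) \<le> k"
    using det unfolding quotient_detects_def by blast
  obtain t \<psi> where v: "valid_table t" and \<psi>: "\<psi> \<in> hom G (table_group t)"
    and ne: "\<psi> ?g \<noteq> \<one>\<^bsub>table_group t\<^esub>" and lt: "length t = card (rcosets\<^bsub>G\<^esub> N)"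
    by (rule finite_quotient_table[OF G N word_eval_closed[OF G ss w]])
  define fl where "fl = map \<psi> ss"
  define x where "x = marked_code t fl"
  have flt: "\<forall>y\<in>set fl. y < length t"
    using ss \<psi> by (auto simp: fl_def hom_def Pi_def)
  have "extends_to_hom G ss t fl"
    unfolding extends_to_hom_def fl_def using \<psi> by auto
  then have "c x = 1"
    using c v flt unfolding decides_CFQ_def x_def fl_def by simp
  moreover have dec: "decode_table (unpair_fst x) = t" "list_decode (unpair_snd x) = fl"
    by (simp_all add: x_def marked_code_def decode_table_encode)
  ultimately have "cfq_witness c (length ss) k x"
    using v flt lt Nk code_valid_table_iff[of "unpair_fst x"] length_decode_table[of "unpair_fst x"]
    by (auto simp: cfq_witness_def code_length_def fl_def)
  moreover have "x < cfq_witness_bound (length ss) k"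
    unfolding x_def using valid_table_closed[OF v] lt Nk flt
    by (intro marked_code_less_cfq_witness_bound) (simp_all add: fl_def)
  moreover have "\<psi> ?g = code_eval (unpair_fst x) (unpair_snd x) (list_encode w)"
    using v \<psi> by (intro code_eval_eq[OF G ss _ _ _ _ w]) (simp_all add: dec fl_def)
  moreover have "code_one (unpair_fst x) = \<one>\<^bsub>table_group t\<^esub>"
    using code_one_eq v dec by simp
  ultimately show ?thesis
    unfolding table_search_detects_def using ne by auto
qed

lemma table_search_detects_imp_quotient_detects:
  assumes G: "group G" and ss: "set ss \<subseteq> carrier G" and c: "decides_CFQ G ss c"
    and w: "valid_word ss w" and det: "table_search_detects c (length ss) k (list_encode w)"
  shows "quotient_detects G k (word_eval G ss w)"
proof -
  obtain x where x: "cfq_witness c (length ss) k x"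
    and ne: "code_eval (unpair_fst x) (unpair_snd x) (list_encode w) \<noteq> code_one (unpair_fst x)"
    using det unfolding table_search_detects_def by blast
  define t where "t = decode_table (unpair_fst x)"
  define fl where "fl = list_decode (unpair_snd x)"
  have v: "valid_table t" and lfl: "length fl = length ss" and flt: "\<forall>y\<in>set fl. y < length t"
    and tk: "length t \<le> k"
    using x code_valid_table_iff by (auto simp: cfq_witness_def t_def fl_def code_length_def)
  have "c (marked_code t fl) = 1"
    using x marked_code_decode[of x] by (simp add: cfq_witness_def t_def fl_def)
  then obtain \<psi> where \<psi>: "\<psi> \<in> hom G (table_group t)" and \<psi>ss: "\<forall>i<length ss. \<psi> (ss ! i) = fl ! i"
    using c v lfl flt unfolding decides_CFQ_def extends_to_hom_def by blast
  have "\<psi> (word_eval G ss w) = code_eval (unpair_fst x) (unpair_snd x) (list_encode w)"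
    using v \<psi> \<psi>ss lfl unfolding t_def fl_def by (rule code_eval_eq[OF G ss _ _ _ _ w])
  moreover have "code_one (unpair_fst x) = \<one>\<^bsub>table_group t\<^esub>"
    using code_one_eq v unfolding t_def by simp
  ultimately have "\<psi> (word_eval G ss w) \<noteq> \<one>\<^bsub>table_group t\<^esub>"
    using ne by simp
  then have "quotient_detects G (length t) (word_eval G ss w)"
    by (rule hom_table_detects[OF G v \<psi> word_eval_closed[OF G ss w]])
  then show ?thesis using tk by (rule quotient_detects_mono)
qed

text \<open>Over an arbitrary generating list: translate into the list for which CFQ holds.\<close>
lemma decidable_quotient_detects:
  assumes G: "group G" and cfq: "CFQ G" and g: "gen_list G ss"
  obtains D where "decidable_pred (\<lambda>p. D (unpair_fst p) (unpair_snd p))"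
    "\<And>k w. valid_word ss w \<Longrightarrow> D k (list_encode w) \<longleftrightarrow> quotient_detects G k (word_eval G ss w)"
proof -
  obtain ss0 c where g0: "gen_list G ss0" and c: "recursive_fun c" and cs: "decides_CFQ G ss0 c"
    using cfq unfolding CFQ_def CFQ_wrt_iff_decides_CFQ by blast
  have ss0: "set ss0 \<subseteq> carrier G" using g0 by (simp add: gen_list_def)
  obtain tr
    where tr: "\<And>w. valid_word ss w \<Longrightarrow> valid_word ss0 (tr w) \<and> word_eval G ss0 (tr w) = word_eval G ss w"
    and r: "recursive_fun (\<lambda>y. list_encode (tr (list_decode y)))"
    using gen_list_translation[OF G g g0] by blast
  define D
    where "D k y \<longleftrightarrow> table_search_detects c (length ss0) k (list_encode (tr (list_decode y)))" for k y
  have "decidable_pred (\<lambda>p. D (unpair_fst p) (unpair_snd p))"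
    unfolding D_def by (intro decidable_pred_table_search_detects c recursive_intros recursive_fun_comp[OF r])
  moreover have "D k (list_encode w) \<longleftrightarrow> quotient_detects G k (word_eval G ss w)"
    if "valid_word ss w" for k w
  proof -
    have "D k (list_encode w) \<longleftrightarrow> table_search_detects c (length ss0) k (list_encode (tr w))"
      by (simp add: D_def)
    also have "\<dots> \<longleftrightarrow> quotient_detects G k (word_eval G ss0 (tr w))"
      using tr[OF that] quotient_detects_imp_table_search_detects[OF G ss0 cs]
        table_search_detects_imp_quotient_detects[OF G ss0 cs] by blast
    finally show ?thesis using tr[OF that] by simp
  qed
  ultimately show thesis by (rule that)
qed

section \<open>Word problem and depth\<close>

lemma decidable_set_iff_decidable_pred: "decidable_set A \<longleftrightarrow> decidable_pred (\<lambda>n. n \<in> A)"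
proof
  assume "decidable_set A"
  then obtain c where c: "recursive_fun c" and c_eq: "\<And>n. c n = (if n \<in> A then 1 else 0)"
    unfolding decidable_set_def by blast
  have "c = (\<lambda>n. if n \<in> A then 1 else 0)"
    using c_eq by (intro HOL.ext) simp
  with c show "decidable_pred (\<lambda>n. n \<in> A)"
    unfolding decidable_pred_def by simp
qed (auto simp: decidable_set_def decidable_pred_def)

lemma word_problem_set_iff:
  "m \<in> word_problem_set G ss
     \<longleftrightarrow> valid_word ss (list_decode m) \<and> word_eval G ss (list_decode m) = \<one>\<^bsub>G\<^esub>"
proof
  assume "m \<in> word_problem_set G ss"
  then obtain w where "m = list_encode w" "valid_word ss w" "word_eval G ss w = \<one>\<^bsub>G\<^esub>"
    unfolding word_problem_set_def by blast
  then show "valid_word ss (list_decode m) \<and> word_eval G ss (list_decode m) = \<one>\<^bsub>G\<^esub>" by simp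
next
  assume "valid_word ss (list_decode m) \<and> word_eval G ss (list_decode m) = \<one>\<^bsub>G\<^esub>"
  then show "m \<in> word_problem_set G ss" unfolding word_problem_set_def
    by (intro CollectI exI[of _ "list_decode m"]) simp
qed

lemma decidable_pred_valid_word: "decidable_pred (\<lambda>m. valid_word ss (list_decode m))"
  unfolding valid_word_def by (intro decidable_pred_list_all decidable_pred_less recursive_intros)

lemma decidable_word_problem_set:
  assumes G: "group G" and wp: "solvable_WP G" and g: "gen_list G ss"
  shows "decidable_pred (\<lambda>m. m \<in> word_problem_set G ss)"
proof -
  obtain ss1 d where g1: "gen_list G ss1" and d: "recursive_fun d"
    and dd: "\<And>m. d m = (if m \<in> word_problem_set G ss1 then 1 else 0)"
    using wp unfolding solvable_WP_def decidable_set_def by blast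
  obtain tr
    where tr: "\<And>w. valid_word ss w \<Longrightarrow> valid_word ss1 (tr w) \<and> word_eval G ss1 (tr w) = word_eval G ss w"
    and r: "recursive_fun (\<lambda>y. list_encode (tr (list_decode y)))"
    using gen_list_translation[OF G g g1] by blast
  have "m \<in> word_problem_set G ss
      \<longleftrightarrow> valid_word ss (list_decode m) \<and> d (list_encode (tr (list_decode m))) = 1" for m
  proof (cases "valid_word ss (list_decode m)")
    case True
    then show ?thesis using tr[OF True] by (simp add: dd word_problem_set_iff)
  qed (simp add: word_problem_set_iff)
  moreover have "decidable_pred (\<lambda>m. valid_word ss (list_decode m) \<and> d (list_encode (tr (list_decode m))) = 1)"
    by (intro decidable_pred_conj decidable_pred_valid_word decidable_pred_eq recursive_fun_comp[OF d r]
        recursive_intros)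
  ultimately show ?thesis by simp
qed

lemma solvable_WP_if_depth_recursively_bounded:
  assumes G: "group G" and rf: "residually_finite G" and cfq: "CFQ G" and g: "gen_list G ss"
    and h: "recursive_fun h" and depth_le: "\<And>n. depth G ss n \<le> h n"
  shows "solvable_WP G"
proof -
  obtain D where D: "decidable_pred (\<lambda>p. D (unpair_fst p) (unpair_snd p))"
    and D_iff: "\<And>k w. valid_word ss w \<Longrightarrow> D k (list_encode w) \<longleftrightarrow> quotient_detects G k (word_eval G ss w)"
    using decidable_quotient_detects[OF G cfq g] by blast
  have ss: "set ss \<subseteq> carrier G" using g by (simp add: gen_list_def)
  have trivial_iff: "word_eval G ss w = \<one>\<^bsub>G\<^esub> \<longleftrightarrow> \<not> D (h (length w)) (list_encode w)"
    if w: "valid_word ss w" for w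
  proof
    assume "word_eval G ss w = \<one>\<^bsub>G\<^esub>"
    then show "\<not> D (h (length w)) (list_encode w)"
      using D_iff[OF w] not_quotient_detects_one by simp
  next
    assume not_D: "\<not> D (h (length w)) (list_encode w)"
    show "word_eval G ss w = \<one>\<^bsub>G\<^esub>"
    proof (rule ccontr)
      assume "word_eval G ss w \<noteq> \<one>\<^bsub>G\<^esub>"
      then have "quotient_detects G (depth G ss (length w)) (word_eval G ss w)"
        using depth_bound_depth[OF G rf ss] w unfolding depth_bound_def by blast
      then have "quotient_detects G (h (length w)) (word_eval G ss w)"
        using depth_le by (rule quotient_detects_mono)
      then show False using not_D D_iff[OF w] by simp
    qed
  qed
  have "m \<in> word_problem_set G ss \<longleftrightarrow> valid_word ss (list_decode m) \<and> \<not> D (h (code_length m)) m" for m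
  proof (cases "valid_word ss (list_decode m)")
    case True
    then show ?thesis using trivial_iff[OF True] by (simp add: word_problem_set_iff code_length_def)
  qed (simp add: word_problem_set_iff)
  moreover have "decidable_pred (\<lambda>m. valid_word ss (list_decode m) \<and> \<not> D (h (code_length m)) m)"
    by (intro decidable_pred_conj decidable_pred_valid_word decidable_pred_not decidable_pred_app2[OF D]
        recursive_fun_comp[OF h] recursive_fun_code_length recursive_intros)
  ultimately show ?thesis
    unfolding solvable_WP_def decidable_set_iff_decidable_pred using g by auto
qed

text \<open>Words of length at most \<open>n\<close> have codes below \<open>list_code_bound n (2 * length ss)\<close>, so whether
  \<open>k\<close> bounds the depth at \<open>n\<close> is decidable, and the depth is found by minimisation.\<close>
lemma recursive_depth_if_solvable_WP:
  assumes G: "group G" and rf: "residually_finite G" and cfq: "CFQ G" and wp: "solvable_WP G"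
    and g: "gen_list G ss"
  shows "recursive_fun (depth G ss)"
proof -
  obtain D where D: "decidable_pred (\<lambda>p. D (unpair_fst p) (unpair_snd p))"
    and D_iff: "\<And>k w. valid_word ss w \<Longrightarrow> D k (list_encode w) \<longleftrightarrow> quotient_detects G k (word_eval G ss w)"
    using decidable_quotient_detects[OF G cfq g] by blast
  have ss: "set ss \<subseteq> carrier G" using g by (simp add: gen_list_def)
  define Q where "Q n k \<longleftrightarrow> (\<forall>y<Suc (list_code_bound n (2 * length ss)).
       valid_word ss (list_decode y) \<and> code_length y \<le> n \<and> y \<notin> word_problem_set G ss \<longrightarrow> D k y)"
    for n k
  have code_bound: "list_encode w < Suc (list_code_bound n (2 * length ss))"
    if "valid_word ss w" "length w \<le> n" for w n
  proof -
    have "list_encode w \<le> list_code_bound n (2 * length ss)"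
      using that by (intro list_encode_le_list_code_bound) (auto simp: valid_word_def)
    then show ?thesis by simp
  qed
  have depth_bound_iff: "depth_bound G ss n k \<longleftrightarrow> Q n k" for n k
  proof
    assume bound: "depth_bound G ss n k"
    show "Q n k"
      unfolding Q_def
    proof (intro allI impI)
      fix y assume "valid_word ss (list_decode y) \<and> code_length y \<le> n \<and> y \<notin> word_problem_set G ss"
      then have "quotient_detects G k (word_eval G ss (list_decode y))" "valid_word ss (list_decode y)"
        using bound by (auto simp: depth_bound_def word_problem_set_iff code_length_def)
      then show "D k y" using D_iff[of "list_decode y" k] by simp
    qed
  next
    assume Q: "Q n k"
    show "depth_bound G ss n k"
      unfolding depth_bound_def
    proof (intro allI impI)
      fix w assume w: "valid_word ss w \<and> length w \<le> n \<and> word_eval G ss w \<noteq> \<one>\<^bsub>G\<^esub>"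
      then have "D k (list_encode w)"
        using Q code_bound unfolding Q_def by (simp add: word_problem_set_iff code_length_def)
      then show "quotient_detects G k (word_eval G ss w)" using D_iff w by blast
    qed
  qed
  have "recursive_fun2 (\<lambda>k n. if Q n k then 0 else 1)"
    unfolding recursive_fun2_def Q_def valid_word_def
    by (intro recursive_fun_if decidable_pred_all_less decidable_pred_imp decidable_pred_conj
        decidable_pred_list_all decidable_pred_le decidable_pred_not decidable_pred_less
        decidable_pred_app2[OF D] decidable_pred_comp[OF decidable_word_problem_set[OF G wp g]] recursive_fun_code_length
        recursive_fun_Suc recursive_fun_list_code_bound recursive_intros)
  moreover have "\<exists>k. (if Q n k then 0 else 1) = (0::nat)" for n
  proof -
    obtain k where "depth_bound G ss n k" using depth_bound_exists[OF G rf ss] by blast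
    then show ?thesis by (intro exI[of _ k]) (simp add: depth_bound_iff)
  qed
  ultimately have "recursive_fun (\<lambda>n. LEAST k. (if Q n k then 0 else 1) = (0::nat))"
    by (rule recursive_fun_Least)
  moreover have "depth G ss = (\<lambda>n. LEAST k. (if Q n k then 0 else 1) = (0::nat))"
    by (rule HOL.ext) (simp add: depth_eq_Least_depth_bound depth_bound_iff)
  ultimately show ?thesis by simp
qed

theorem mainTheorem14:
  fixes G :: "('a, 'b) monoid_scheme"
  assumes "group G" and "fin_gen G" and "residually_finite G" and "CFQ G"
  shows "((\<exists>ss h. gen_list G ss \<and> recursive_fun h \<and> (\<forall>n. depth G ss n \<le> h n))
            \<longrightarrow> solvable_WP G)
       \<and> (solvable_WP G \<longrightarrow> (\<forall>ss. gen_list G ss \<longrightarrow> recursive_fun (depth G ss)))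
       \<and> (solvable_WP G \<longleftrightarrow> (\<forall>ss. gen_list G ss \<longrightarrow> recursive_fun (depth G ss)))"
proof -
  have bounded_imp_WP:
    "(\<exists>ss h. gen_list G ss \<and> recursive_fun h \<and> (\<forall>n. depth G ss n \<le> h n)) \<longrightarrow> solvable_WP G"
    using solvable_WP_if_depth_recursively_bounded[OF assms(1,3,4)] by blast
  moreover have "solvable_WP G \<longrightarrow> (\<forall>ss. gen_list G ss \<longrightarrow> recursive_fun (depth G ss))"
    using recursive_depth_if_solvable_WP[OF assms(1,3,4)] by blast
  moreover obtain ss where "gen_list G ss"
    using assms(2) unfolding fin_gen_def by blast
  then have "(\<forall>ss. gen_list G ss \<longrightarrow> recursive_fun (depth G ss)) \<longrightarrow> solvable_WP G"
    using bounded_imp_WP by blast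
  ultimately show ?thesis by blast
qed

end
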